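(* Let $\{\mathcal J_i\}_{i=1}^m$ be a partition of $\{1,\dots,n\}$ into consecutive intervals listed in increasing order, $|\mathcal J_i|=d(i)$, let $P_i$ be the orthogonal projection onto $\mathrm{span}\{e_k:k\in\mathcal J_i\}$, and let $\mathcal C_{\mathcal P}(X)=\sum_{i=1}^m P_iXP_i$ for $X\in\mathcal M_n(\mathbb C)$. Then the following are equivalent: (1) the set $\mathcal C_{\mathcal P}(\mathcal U_n(S))=\{\mathcal C_{\mathcal P}(U^*SU):U\in\mathcal M_n(\mathbb C)\text{ unitary}\}$ is convex for every positive semidefinite $S\in\mathcal M_n(\mathbb C)$; (2) $d(i)=1$ for every $1\le i\le m$ (and hence $m=n$). *)

theory Defs
  imports "Jordan_Normal_Form.Schur_Decomposition"
begin

text \<open>Complex n x n matrices are Jordan_Normal_Form matrices in carrier_mat n n.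
  Indices are 0-based: the paper's index k in 1..n corresponds to k-1 here.\<close>

definition unitary_mat :: "nat \<Rightarrow> complex mat \<Rightarrow> bool" where
  "unitary_mat n U \<longleftrightarrow> U \<in> carrier_mat n n \<and>
     mat_adjoint U * U = 1\<^sub>m n \<and> U * mat_adjoint U = 1\<^sub>m n"

definition psd_mat :: "nat \<Rightarrow> complex mat \<Rightarrow> bool" where
  "psd_mat n S \<longleftrightarrow> S \<in> carrier_mat n n \<and> mat_adjoint S = S \<and>
     (\<forall>x \<in> carrier_vec n. Im (conjugate x \<bullet> (S *\<^sub>v x)) = 0 \<and>
                         Re (conjugate x \<bullet> (S *\<^sub>v x)) \<ge> 0)"

text \<open>A partition of {0..<n} into consecutive intervals in increasing order is given
  by the list d of block sizes d(1),...,d(m) (all positive, summing to n).\<close>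
definition block_start :: "nat list \<Rightarrow> nat \<Rightarrow> nat" where
  "block_start d i = sum_list (take i d)"

definition block :: "nat list \<Rightarrow> nat \<Rightarrow> nat set" where
  "block d i = {block_start d i ..< block_start d i + d ! i}"

definition block_proj :: "nat \<Rightarrow> nat list \<Rightarrow> nat \<Rightarrow> complex mat" where
  "block_proj n d i = mat n n (\<lambda>(j, k). if j = k \<and> j \<in> block d i then 1 else 0)"

definition pinching :: "nat \<Rightarrow> nat list \<Rightarrow> complex mat \<Rightarrow> complex mat" where
  "pinching n d X = foldr (+) (map (\<lambda>i. block_proj n d i * X * block_proj n d i) [0..<length d])
                      (0\<^sub>m n n)"

definition unitary_orbit :: "nat \<Rightarrow> complex mat \<Rightarrow> complex mat set" where
  "unitary_orbit n S = {mat_adjoint U * S * U | U. unitary_mat n U}"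

definition convex_mat_set :: "complex mat set \<Rightarrow> bool" where
  "convex_mat_set A \<longleftrightarrow> (\<forall>X \<in> A. \<forall>Y \<in> A. \<forall>t::real. 0 \<le> t \<and> t \<le> 1 \<longrightarrow>
      complex_of_real (1 - t) \<cdot>\<^sub>m X + complex_of_real t \<cdot>\<^sub>m Y \<in> A)"

end

theory Submission
  imports Defs
begin

text \<open>
  If some block contains two consecutive indices a, a+1, let S be the projection onto e_a.
  S and its conjugate by the transposition of a and a+1 are both fixed by the pinching, so
  convexity would make their midpoint the pinching of some U^* S U.  But the a,a+1 corner of
  U^* S U is the rank-one matrix with entries cnj (U_aj) U_ak, which is never diag(1/2,1/2).

  If all blocks are singletons, the pinching is the diagonal part, and the claim is the
  convexity part of the Schur--Horn theorem: the diagonals of the unitary orbit of a Hermitian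
  matrix with spectrum \<lambda> are exactly the vectors majorized by \<lambda>.  The diagonal of W^* diag(\<lambda>) W
  is P^T \<lambda> with P = (|W_pk|^2) doubly stochastic, which gives majorization.  Conversely a rotation
  in a coordinate plane realizes any T-transform of the diagonal (by the intermediate value
  theorem), and every vector majorized by \<lambda> is obtained from \<lambda> by finitely many T-transforms.
\<close>

section \<open>Adjoints and unitary matrices\<close>

lemma mat_adjoint_eq: "mat_adjoint (A :: complex mat) = mat (dim_col A) (dim_row A) (\<lambda>(i,j). cnj (A $$ (j,i)))"
  unfolding mat_adjoint_def mat_of_rows_def by (rule eq_matI) auto

lemma dim_mat_adjoint[simp]:
  "dim_row (mat_adjoint (A :: complex mat)) = dim_col A"
  "dim_col (mat_adjoint (A :: complex mat)) = dim_row A"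
  unfolding mat_adjoint_eq by simp_all

lemma mat_adjoint_carrier_mat[simp]: "A \<in> carrier_mat n m \<Longrightarrow> mat_adjoint (A :: complex mat) \<in> carrier_mat m n"
  by (rule carrier_matI) auto

lemma index_mat_adjoint[simp]:
  "i < dim_col A \<Longrightarrow> j < dim_row A \<Longrightarrow> mat_adjoint (A :: complex mat) $$ (i,j) = cnj (A $$ (j,i))"
  unfolding mat_adjoint_eq by simp

lemma mat_adjoint_adjoint[simp]: "mat_adjoint (mat_adjoint (A :: complex mat)) = A"
  by (rule eq_matI) auto

lemma mat_adjoint_one[simp]: "mat_adjoint (1\<^sub>m n :: complex mat) = 1\<^sub>m n"
  by (rule eq_matI) auto

lemma index_mult_mat_sum:
  "A \<in> carrier_mat n m \<Longrightarrow> B \<in> carrier_mat m p \<Longrightarrow> i < n \<Longrightarrow> j < p \<Longrightarrow>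
   (A * B) $$ (i,j) = (\<Sum>k<m. A $$ (i,k) * B $$ (k,j))"
  by (simp add: scalar_prod_def atLeast0LessThan)

lemma mat_adjoint_mult:
  assumes "A \<in> carrier_mat n m" "B \<in> carrier_mat m p"
  shows "mat_adjoint (A * B :: complex mat) = mat_adjoint B * mat_adjoint A"
proof (rule eq_matI)
  fix i j assume "i < dim_row (mat_adjoint B * mat_adjoint A)" "j < dim_col (mat_adjoint B * mat_adjoint A)"
  then have i: "i < p" and j: "j < n" using assms by auto
  have "mat_adjoint (A * B) $$ (i,j) = (\<Sum>k<m. cnj (B $$ (k,i)) * cnj (A $$ (j,k)))"
    using assms i j by (simp add: index_mult_mat_sum[OF assms j i] mult.commute)
  also have "\<dots> = (mat_adjoint B * mat_adjoint A) $$ (i,j)"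
    using assms i j by (subst index_mult_mat_sum[of _ p m _ n]) auto
  finally show "mat_adjoint (A * B) $$ (i,j) = (mat_adjoint B * mat_adjoint A) $$ (i,j)" .
qed (use assms in simp_all)

lemma index_adjoint_mult_mult:
  fixes X B Y :: "complex mat"
  assumes X: "X \<in> carrier_mat n n" and B: "B \<in> carrier_mat n n" and Y: "Y \<in> carrier_mat n n"
    and i: "i < n" and j: "j < n"
  shows "(mat_adjoint X * B * Y) $$ (i,j) = (\<Sum>k<n. \<Sum>l<n. cnj (X $$ (k,i)) * B $$ (k,l) * Y $$ (l,j))"
proof -
  have XB: "mat_adjoint X * B \<in> carrier_mat n n" using X B by (intro mult_carrier_mat) auto
  have "(mat_adjoint X * B) $$ (i,l) = (\<Sum>k<n. cnj (X $$ (k,i)) * B $$ (k,l))" if "l < n" for l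
    using X B i that by (subst index_mult_mat_sum[of _ n n]) auto
  then have "(mat_adjoint X * B * Y) $$ (i,j) = (\<Sum>l<n. \<Sum>k<n. cnj (X $$ (k,i)) * B $$ (k,l) * Y $$ (l,j))"
    by (simp add: index_mult_mat_sum[OF XB Y i j] sum_distrib_right)
  also have "\<dots> = (\<Sum>k<n. \<Sum>l<n. cnj (X $$ (k,i)) * B $$ (k,l) * Y $$ (l,j))"
    by (rule sum.swap)
  finally show ?thesis .
qed

lemma mat_adjoint_conj_mult:
  fixes W V A :: "complex mat"
  assumes W: "W \<in> carrier_mat n n" and V: "V \<in> carrier_mat n n" and A: "A \<in> carrier_mat n n"
  shows "mat_adjoint (W * V) * A * (W * V) = mat_adjoint V * (mat_adjoint W * A * W) * V"
proof -
  have aW: "mat_adjoint W \<in> carrier_mat n n" and aV: "mat_adjoint V \<in> carrier_mat n n"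
    using W V by simp_all
  have "mat_adjoint (W * V) * A * (W * V) = mat_adjoint V * (mat_adjoint W * A) * (W * V)"
    using assoc_mult_mat[OF aV aW A] by (simp add: mat_adjoint_mult[OF W V])
  also have "\<dots> = mat_adjoint V * ((mat_adjoint W * A) * (W * V))"
    using assoc_mult_mat[OF aV mult_carrier_mat[OF aW A] mult_carrier_mat[OF W V]] .
  also have "(mat_adjoint W * A) * (W * V) = (mat_adjoint W * A * W) * V"
    using assoc_mult_mat[OF mult_carrier_mat[OF aW A] W V] by simp
  also have "mat_adjoint V * (mat_adjoint W * A * W * V) = mat_adjoint V * (mat_adjoint W * A * W) * V"
    using assoc_mult_mat[OF aV mult_carrier_mat[OF mult_carrier_mat[OF aW A] W] V] by simp
  finally show ?thesis .
qed

lemma hermitian_conj: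
  fixes W A :: "complex mat"
  assumes W: "W \<in> carrier_mat n n" and A: "A \<in> carrier_mat n n" and herm: "mat_adjoint A = A"
  shows "mat_adjoint (mat_adjoint W * A * W) = mat_adjoint W * A * W"
proof -
  have aW: "mat_adjoint W \<in> carrier_mat n n" using W by simp
  have "mat_adjoint (mat_adjoint W * A * W) = mat_adjoint W * (mat_adjoint A * W)"
    using mat_adjoint_mult[OF mult_carrier_mat[OF aW A] W] mat_adjoint_mult[OF aW A] by simp
  then show ?thesis using herm assoc_mult_mat[OF aW A W] by simp
qed

lemma hermitian_index:
  "B \<in> carrier_mat n n \<Longrightarrow> mat_adjoint B = B \<Longrightarrow> p < n \<Longrightarrow> q < n \<Longrightarrow> B $$ (q,p) = cnj (B $$ (p,q))"
  by (metis carrier_matD index_mat_adjoint)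

lemma hermitian_diag_real:
  "B \<in> carrier_mat n n \<Longrightarrow> mat_adjoint B = B \<Longrightarrow> k < n \<Longrightarrow> B $$ (k,k) = of_real (Re (B $$ (k,k)))"
  using hermitian_index[of B n k k] by (simp add: complex_eq_iff)

lemma unitary_mat_carrier: "unitary_mat n U \<Longrightarrow> U \<in> carrier_mat n n"
  unfolding unitary_mat_def by simp

lemma unitary_matI: "U \<in> carrier_mat n n \<Longrightarrow> mat_adjoint U * U = 1\<^sub>m n \<Longrightarrow> unitary_mat n U"
  using mat_mult_left_right_inverse[of "mat_adjoint U" n U] unfolding unitary_mat_def by auto

lemma unitary_mat_one: "unitary_mat n (1\<^sub>m n)"
  unfolding unitary_mat_def by simp

lemma unitary_mat_adjoint: "unitary_mat n U \<Longrightarrow> unitary_mat n (mat_adjoint U)"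
  unfolding unitary_mat_def by auto

lemma unitary_mat_mult:
  assumes "unitary_mat n U" "unitary_mat n V"
  shows "unitary_mat n (U * V)"
proof (rule unitary_matI)
  have U: "U \<in> carrier_mat n n" and V: "V \<in> carrier_mat n n"
    using assms unitary_mat_carrier by auto
  then show "U * V \<in> carrier_mat n n" by simp
  have "mat_adjoint (U * V) * 1\<^sub>m n * (U * V) = mat_adjoint V * (mat_adjoint U * 1\<^sub>m n * U) * V"
    using U V by (intro mat_adjoint_conj_mult) auto
  then show "mat_adjoint (U * V) * (U * V) = 1\<^sub>m n"
    using assms U V by (simp add: unitary_mat_def)
qed

lemma unitary_col_norm:
  assumes W: "unitary_mat n W" and k: "k < n"
  shows "(\<Sum>p<n. (cmod (W $$ (p,k)))\<^sup>2) = 1"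
proof -
  have Wm: "W \<in> carrier_mat n n" using unitary_mat_carrier[OF W] .
  have "(mat_adjoint W * W) $$ (k,k) = (\<Sum>p<n. W $$ (p,k) * cnj (W $$ (p,k)))"
    using Wm k by (subst index_mult_mat_sum[of _ n n _ n]) (auto simp: mult.commute)
  also have "\<dots> = (\<Sum>p<n. of_real ((cmod (W $$ (p,k)))\<^sup>2))"
    by (simp only: complex_norm_square)
  finally have "of_real (\<Sum>p<n. (cmod (W $$ (p,k)))\<^sup>2) = (1 :: complex)"
    using W k unfolding unitary_mat_def by simp
  then show ?thesis by (metis of_real_eq_1_iff)
qed

lemma unitary_row_norm:
  assumes W: "unitary_mat n W" and p: "p < n"
  shows "(\<Sum>k<n. (cmod (W $$ (p,k)))\<^sup>2) = 1"
  using unitary_col_norm[OF unitary_mat_adjoint[OF W] p] unitary_mat_carrier[OF W] p by simp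

lemma unitary_conj_carrier:
  "unitary_mat n U \<Longrightarrow> S \<in> carrier_mat n n \<Longrightarrow> mat_adjoint U * S * U \<in> carrier_mat n n"
  by (intro mult_carrier_mat[of _ n n] mat_adjoint_carrier_mat) (auto dest: unitary_mat_carrier)

lemma unitary_orbit_self: "S \<in> carrier_mat n n \<Longrightarrow> S \<in> unitary_orbit n S"
  unfolding unitary_orbit_def using unitary_mat_one[of n] by (auto intro!: exI[of _ "1\<^sub>m n"])

lemma unitary_orbit_conj:
  assumes "A \<in> unitary_orbit n S" "unitary_mat n V" "S \<in> carrier_mat n n"
  shows "mat_adjoint V * A * V \<in> unitary_orbit n S"
proof -
  obtain U where U: "unitary_mat n U" and A: "A = mat_adjoint U * S * U"
    using assms(1) unfolding unitary_orbit_def by blast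
  have "mat_adjoint V * A * V = mat_adjoint (U * V) * S * (U * V)"
    unfolding A using U assms(2,3) by (intro mat_adjoint_conj_mult[symmetric]) (auto simp: unitary_mat_carrier)
  then show ?thesis
    unfolding unitary_orbit_def using unitary_mat_mult[OF U assms(2)] by auto
qed

lemma unitary_orbit_carrier: "A \<in> unitary_orbit n S \<Longrightarrow> S \<in> carrier_mat n n \<Longrightarrow> A \<in> carrier_mat n n"
  unfolding unitary_orbit_def by (auto intro: unitary_conj_carrier)

lemma unitary_orbit_hermitian:
  "A \<in> unitary_orbit n S \<Longrightarrow> S \<in> carrier_mat n n \<Longrightarrow> mat_adjoint S = S \<Longrightarrow> mat_adjoint A = A"
  unfolding unitary_orbit_def by (auto intro: hermitian_conj dest: unitary_mat_carrier)

lemma unitary_conj_cancel: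
  fixes Q S :: "complex mat"
  assumes Q: "unitary_mat n Q" and S: "S \<in> carrier_mat n n"
  shows "Q * (mat_adjoint Q * S * Q) * mat_adjoint Q = S"
proof -
  have Qm: "Q \<in> carrier_mat n n" using unitary_mat_carrier[OF Q] .
  have aQ: "mat_adjoint Q \<in> carrier_mat n n" using Qm by simp
  have QQ: "Q * mat_adjoint Q = 1\<^sub>m n" using Q unfolding unitary_mat_def by simp
  have "Q * (mat_adjoint Q * S * Q) * mat_adjoint Q = Q * (mat_adjoint Q * S * Q * mat_adjoint Q)"
    using assoc_mult_mat[OF Qm mult_carrier_mat[OF mult_carrier_mat[OF aQ S] Qm] aQ] .
  also have "mat_adjoint Q * S * Q * mat_adjoint Q = mat_adjoint Q * S * (Q * mat_adjoint Q)"
    using assoc_mult_mat[OF mult_carrier_mat[OF aQ S] Qm aQ] .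
  also have "\<dots> = mat_adjoint Q * S" unfolding QQ by (rule right_mult_one_mat[OF mult_carrier_mat[OF aQ S]])
  also have "Q * (mat_adjoint Q * S) = (Q * mat_adjoint Q) * S" using assoc_mult_mat[OF Qm aQ S] by simp
  also have "\<dots> = S" unfolding QQ by (rule left_mult_one_mat[OF S])
  finally show ?thesis .
qed

lemma unitary_orbit_sym:
  assumes A: "A \<in> unitary_orbit n S" and S: "S \<in> carrier_mat n n"
  shows "S \<in> unitary_orbit n A"
proof -
  obtain U where U: "unitary_mat n U" and A_def: "A = mat_adjoint U * S * U"
    using A unfolding unitary_orbit_def by blast
  have "S = mat_adjoint (mat_adjoint U) * A * mat_adjoint U"
    unfolding A_def using unitary_conj_cancel[OF U S] by simp
  then show ?thesis unfolding unitary_orbit_def using unitary_mat_adjoint[OF U] by blast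
qed

lemma unitary_orbit_eq:
  assumes A: "A \<in> unitary_orbit n S" and S: "S \<in> carrier_mat n n"
  shows "unitary_orbit n A = unitary_orbit n S"
proof -
  have "unitary_orbit n A \<subseteq> unitary_orbit n S" if "A \<in> unitary_orbit n S" "S \<in> carrier_mat n n" for A S
    using that unfolding unitary_orbit_def[of n A] by (auto intro: unitary_orbit_conj)
  then show ?thesis using A S unitary_orbit_sym[OF A S] unitary_orbit_carrier[OF A S] by blast
qed

definition perm_mat :: "nat \<Rightarrow> (nat \<Rightarrow> nat) \<Rightarrow> complex mat" where
  "perm_mat n \<sigma> = mat n n (\<lambda>(i,j). if i = \<sigma> j then 1 else 0)"

lemma perm_mat_carrier: "perm_mat n \<sigma> \<in> carrier_mat n n"
  unfolding perm_mat_def by simp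

lemma index_perm_mat_conj:
  assumes s: "\<sigma> permutes {..<n}" and A: "A \<in> carrier_mat n n" and i: "i < n" and j: "j < n"
  shows "(mat_adjoint (perm_mat n \<sigma>) * A * perm_mat n \<sigma>) $$ (i,j) = A $$ (\<sigma> i, \<sigma> j)"
proof -
  let ?P = "perm_mat n \<sigma>"
  have si: "\<sigma> i < n" and sj: "\<sigma> j < n" using permutes_in_image[OF s] i j by auto
  have P: "k < n \<Longrightarrow> l < n \<Longrightarrow> ?P $$ (k,l) = (if k = \<sigma> l then 1 else 0)" for k l
    unfolding perm_mat_def by simp
  have row: "(\<Sum>l<n. cnj (?P $$ (k,i)) * A $$ (k,l) * ?P $$ (l,j)) = (if k = \<sigma> i then A $$ (k, \<sigma> j) else 0)"
    if k: "k < n" for k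
  proof -
    have "(\<Sum>l<n. cnj (?P $$ (k,i)) * A $$ (k,l) * ?P $$ (l,j)) =
        (\<Sum>l<n. if l = \<sigma> j then cnj (?P $$ (k,i)) * A $$ (k,l) else 0)"
      by (rule sum.cong[OF refl]) (use j in \<open>simp add: P\<close>)
    then show ?thesis using sj k i by (simp add: P)
  qed
  have "(mat_adjoint ?P * A * ?P) $$ (i,j) = (\<Sum>k<n. \<Sum>l<n. cnj (?P $$ (k,i)) * A $$ (k,l) * ?P $$ (l,j))"
    by (rule index_adjoint_mult_mult[OF perm_mat_carrier A perm_mat_carrier i j])
  also have "\<dots> = (\<Sum>k<n. if k = \<sigma> i then A $$ (k, \<sigma> j) else 0)"
    by (rule sum.cong[OF refl]) (simp add: row)
  also have "\<dots> = A $$ (\<sigma> i, \<sigma> j)" using si by simp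
  finally show ?thesis .
qed

lemma unitary_perm_mat:
  assumes s: "\<sigma> permutes {..<n}"
  shows "unitary_mat n (perm_mat n \<sigma>)"
proof (rule unitary_matI[OF perm_mat_carrier])
  let ?P = "perm_mat n \<sigma>"
  have aP: "mat_adjoint ?P \<in> carrier_mat n n" using perm_mat_carrier by simp
  have "mat_adjoint ?P * 1\<^sub>m n * ?P = 1\<^sub>m n"
  proof (rule eq_matI)
    fix i j assume "i < dim_row (1\<^sub>m n :: complex mat)" "j < dim_col (1\<^sub>m n :: complex mat)"
    then have i: "i < n" and j: "j < n" by auto
    have "\<sigma> i = \<sigma> j \<longleftrightarrow> i = j" using permutes_inj[OF s] by (auto simp: inj_eq)
    then show "(mat_adjoint ?P * 1\<^sub>m n * ?P) $$ (i,j) = (1\<^sub>m n :: complex mat) $$ (i,j)"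
      using permutes_in_image[OF s] i j by (simp only: index_perm_mat_conj[OF s one_carrier_mat i j]) simp
  qed (use aP perm_mat_carrier in auto)
  then show "mat_adjoint ?P * ?P = 1\<^sub>m n" using right_mult_one_mat[OF aP] by simp
qed

lemma block_start_Suc: "i < length d \<Longrightarrow> block_start d (Suc i) = block_start d i + d ! i"
  unfolding block_start_def by (simp add: take_Suc_conv_app_nth)

lemma block_start_mono: "i \<le> i' \<Longrightarrow> block_start d i \<le> block_start d i'"
proof -
  assume "i \<le> i'"
  then obtain k where "i' = i + k" using le_Suc_ex by blast
  then show ?thesis unfolding block_start_def by (simp add: take_add)
qed

lemma block_end_le_sum_list: "i < length d \<Longrightarrow> block_start d i + d ! i \<le> sum_list d"
  using block_start_mono[of "Suc i" "length d" d] by (simp add: block_start_Suc) (simp add: block_start_def)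

lemma block_disjoint:
  assumes "i < length d" "i' < length d" "j \<in> block d i" "j \<in> block d i'"
  shows "i = i'"
proof -
  have "j \<notin> block d b" if "a < b" "b < length d" "j \<in> block d a" for a b
    using block_start_mono[of "Suc a" b d] block_start_Suc[of a d] that by (auto simp: block_def)
  then show ?thesis using assms by (metis linorder_neqE_nat)
qed

lemma index_block_proj_conj:
  assumes X: "X \<in> carrier_mat n n" and j: "j < n" and k: "k < n"
  shows "(block_proj n d i * X * block_proj n d i) $$ (j,k) =
    (if j \<in> block d i \<and> k \<in> block d i then X $$ (j,k) else 0)"
proof -
  let ?P = "block_proj n d i"
  have P: "?P \<in> carrier_mat n n" unfolding block_proj_def by simp
  have P_index: "a < n \<Longrightarrow> b < n \<Longrightarrow> ?P $$ (a,b) = (if a = b \<and> a \<in> block d i then 1 else 0)" for a b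
    unfolding block_proj_def by simp
  have PX: "(?P * X) $$ (j,b) = (if j \<in> block d i then X $$ (j,b) else 0)" if b: "b < n" for b
  proof -
    have "(?P * X) $$ (j,b) = (\<Sum>a<n. if a = j then (if j \<in> block d i then X $$ (j,b) else 0) else 0)"
      unfolding index_mult_mat_sum[OF P X j b]
      by (rule sum.cong[OF refl]) (use j b in \<open>auto simp: P_index\<close>)
    then show ?thesis using j by simp
  qed
  have "(?P * X * ?P) $$ (j,k) =
      (\<Sum>b<n. if b = k then (if j \<in> block d i \<and> k \<in> block d i then X $$ (j,k) else 0) else 0)"
    unfolding index_mult_mat_sum[OF mult_carrier_mat[OF P X] P j k]
    by (rule sum.cong[OF refl]) (use k in \<open>auto simp: P_index PX\<close>)
  then show ?thesis using k by simp
qed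

lemma foldr_add_mat_carrier:
  "\<forall>i \<in> set xs. f i \<in> carrier_mat n n \<Longrightarrow> foldr (+) (map f xs) (0\<^sub>m n n) \<in> carrier_mat n n"
  by (induction xs) auto

lemma index_foldr_add_mat:
  "\<forall>i \<in> set xs. f i \<in> carrier_mat n n \<Longrightarrow> j < n \<Longrightarrow> k < n \<Longrightarrow>
   foldr (+) (map f xs) (0\<^sub>m n n) $$ (j,k) = (\<Sum>i\<leftarrow>xs. f i $$ (j,k))"
proof (induction xs)
  case (Cons a xs)
  then show ?case using foldr_add_mat_carrier[of xs f n] by simp
qed simp

lemma pinching_carrier: "X \<in> carrier_mat n n \<Longrightarrow> pinching n d X \<in> carrier_mat n n"
  unfolding pinching_def block_proj_def by (rule foldr_add_mat_carrier) (auto intro!: mult_carrier_mat)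

lemma index_pinching:
  assumes X: "X \<in> carrier_mat n n" and j: "j < n" and k: "k < n"
  shows "pinching n d X $$ (j,k) =
    (if \<exists>i<length d. j \<in> block d i \<and> k \<in> block d i then X $$ (j,k) else 0)"
proof -
  let ?f = "\<lambda>i. block_proj n d i * X * block_proj n d i"
  have c: "\<forall>i \<in> set [0..<length d]. ?f i \<in> carrier_mat n n"
    using X unfolding block_proj_def by (auto intro!: mult_carrier_mat)
  have "pinching n d X $$ (j,k) = (\<Sum>i\<leftarrow>[0..<length d]. ?f i $$ (j,k))"
    unfolding pinching_def by (rule index_foldr_add_mat[OF c j k])
  also have "\<dots> = (\<Sum>i<length d. ?f i $$ (j,k))"
    by (simp add: sum_list_sum_nth atLeast0LessThan)
  also have "\<dots> = (\<Sum>i<length d. if j \<in> block d i \<and> k \<in> block d i then X $$ (j,k) else 0)"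
    by (rule sum.cong[OF refl], rule index_block_proj_conj[OF X j k])
  also have "\<dots> = (if \<exists>i<length d. j \<in> block d i \<and> k \<in> block d i then X $$ (j,k) else 0)"
  proof (cases "\<exists>i<length d. j \<in> block d i \<and> k \<in> block d i")
    case True
    then obtain i0 where i0: "i0 < length d" "j \<in> block d i0" "k \<in> block d i0" by blast
    have "(\<Sum>i<length d. if j \<in> block d i \<and> k \<in> block d i then X $$ (j,k) else 0)
        = (\<Sum>i<length d. if i = i0 then X $$ (j,k) else 0)"
    proof (rule sum.cong[OF refl])
      fix i assume "i \<in> {..<length d}"
      then have "j \<in> block d i \<and> k \<in> block d i \<longleftrightarrow> i = i0"
        using i0 block_disjoint[of i d i0 j] by auto
      then show "(if j \<in> block d i \<and> k \<in> block d i then X $$ (j,k) else 0) = (if i = i0 then X $$ (j,k) else 0)"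
        by simp
    qed
    also have "\<dots> = X $$ (j,k)" using i0(1) by simp
    finally show ?thesis using True by (simp only: if_True)
  next
    case False
    then have "(\<Sum>i<length d. if j \<in> block d i \<and> k \<in> block d i then X $$ (j,k) else 0) = 0"
      by (intro sum.neutral) auto
    then show ?thesis using False by (simp only: if_False)
  qed
  finally show ?thesis .
qed

lemma pinching_singletons:
  assumes d: "\<forall>i<length d. d ! i = 1" and n: "sum_list d = n" and X: "X \<in> carrier_mat n n"
  shows "pinching n d X = mat n n (\<lambda>(j,k). if j = k then X $$ (j,j) else 0)"
proof (rule eq_matI)
  have start: "i \<le> length d \<Longrightarrow> block_start d i = i" for i
    using d by (induction i) (auto simp: block_start_Suc, simp add: block_start_def)
  have "d = replicate (length d) 1" using d by (simp add: list_eq_iff_nth_eq)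
  then have "sum_list d = sum_list (replicate (length d) (1::nat))" by (rule arg_cong)
  then have nd: "n = length d" using n by (simp add: sum_list_replicate)
  have blocks: "block d i = {i}" if "i < n" for i using that d start nd unfolding block_def by auto
  fix j k assume "j < dim_row (mat n n (\<lambda>(j,k). if j = k then X $$ (j,j) else 0))"
    "k < dim_col (mat n n (\<lambda>(j,k). if j = k then X $$ (j,j) else 0))"
  then have j: "j < n" and k: "k < n" by auto
  have "(\<exists>i<length d. j \<in> block d i \<and> k \<in> block d i) \<longleftrightarrow> j = k"
    using blocks j k nd by auto
  then show "pinching n d X $$ (j,k) = mat n n (\<lambda>(j,k). if j = k then X $$ (j,j) else 0) $$ (j,k)"
    unfolding index_pinching[OF X j k] using j k by simp
qed (use pinching_carrier[OF X] in auto)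

section \<open>Spectral theorem for Hermitian matrices\<close>

lemma eigenvector_exists:
  fixes A :: "complex mat"
  assumes A: "A \<in> carrier_mat n n" and n: "n > 0"
  shows "\<exists>e v. v \<in> carrier_vec n \<and> v \<noteq> 0\<^sub>v n \<and> A *\<^sub>v v = e \<cdot>\<^sub>v v"
proof -
  have "degree (char_poly A) = n" using degree_monic_char_poly[OF A] by simp
  then have "\<not> constant (poly (char_poly A))" using n by (subst constant_degree) simp
  then obtain e where "poly (char_poly A) e = 0" using fundamental_theorem_of_algebra by blast
  then have "eigenvalue A e" using eigenvalue_root_char_poly[OF A] by simp
  then obtain v where "eigenvector A v e" unfolding eigenvalue_def by blast
  then show ?thesis unfolding eigenvector_def using A by auto
qed

lemma unitary_mat_first_col:
  fixes u :: "complex vec"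
  assumes u: "u \<in> carrier_vec n" and u0: "u \<noteq> 0\<^sub>v n"
  shows "\<exists>W c. unitary_mat n W \<and> (\<forall>p<n. W $$ (p,0) = c * u $ p)"
proof -
  interpret cof_vec_space n "TYPE(complex)" .
  define b where "b = basis_completion u"
  from basis_completion[OF u u0, folded b_def]
  have dist_b: "distinct b" and indep: "\<not> lin_dep (set b)" and bc: "set b \<subseteq> carrier_vec n"
    and hdb: "hd b = u" and len_b: "length b = n" by auto
  have n0: "n \<noteq> 0" using u u0 by (cases "n = 0") auto
  from hdb len_b n0 obtain vs where bv: "b = u # vs" by (cases b) auto
  define ws where "ws = gram_schmidt n b"
  from gram_schmidt_result[OF bc dist_b indep refl, folded ws_def]
  have orth: "corthogonal ws" and wsc: "set ws \<subseteq> carrier_vec n" and len: "length ws = n"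
    using len_b by auto
  have "hd ws = u" unfolding ws_def bv by (rule gram_schmidt_hd[OF u])
  then have ws0: "ws ! 0 = u" using n0 len by (cases ws) auto
  have wsq: "ws ! q \<in> carrier_vec n" if "q < n" for q using wsc len that by auto
  have pos: "ws ! q \<bullet>c ws ! q > 0" if "q < n" for q
    using corthogonalD[OF orth, of q q] len that conjugate_square_ge_0_vec[of "ws ! q"] by (simp add: order_le_less)
  have oz: "ws ! l \<bullet>c ws ! k = 0" if "k < n" "l < n" "k \<noteq> l" for k l
    using corthogonalD[OF orth, of l k] len that by simp
  define N where "N q = sqrt (Re (ws ! q \<bullet>c ws ! q))" for q
  have Nsq: "of_real (N q) * of_real (N q) = ws ! q \<bullet>c ws ! q" if "q < n" for q
    using pos[OF that] unfolding N_def by (simp add: less_complex_def complex_eq_iff flip: of_real_mult)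
  define W where "W = mat n n (\<lambda>(p,q). ws ! q $ p / of_real (N q))"
  have W: "W \<in> carrier_mat n n" unfolding W_def by simp
  have "mat_adjoint W * W = 1\<^sub>m n"
  proof (rule eq_matI)
    fix k l assume "k < dim_row (1\<^sub>m n :: complex mat)" "l < dim_col (1\<^sub>m n :: complex mat)"
    then have k: "k < n" and l: "l < n" by auto
    have "(mat_adjoint W * W) $$ (k,l) = (\<Sum>p<n. mat_adjoint W $$ (k,p) * W $$ (p,l))"
      by (rule index_mult_mat_sum[OF _ W k l]) (use W in simp)
    also have "\<dots> = (\<Sum>p<n. ws ! l $ p * cnj (ws ! k $ p)) / (of_real (N k) * of_real (N l))"
      unfolding sum_divide_distrib
      by (rule sum.cong[OF refl]) (use W k l in \<open>simp add: W_def mult.commute\<close>)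
    also have "\<dots> = (ws ! l \<bullet>c ws ! k) / (of_real (N k) * of_real (N l))"
      using wsq[OF k] wsq[OF l] by (simp add: scalar_prod_def atLeast0LessThan)
    also have "\<dots> = (1\<^sub>m n :: complex mat) $$ (k,l)"
      using Nsq[OF k] pos[OF k] oz[OF k l] k l by (cases "k = l") auto
    finally show "(mat_adjoint W * W) $$ (k,l) = (1\<^sub>m n :: complex mat) $$ (k,l)" .
  qed (use W in auto)
  moreover have "\<forall>p<n. W $$ (p,0) = (1 / of_real (N 0)) * u $ p"
    using n0 ws0 unfolding W_def by simp
  ultimately show ?thesis using unitary_matI[OF W] by blast
qed

lemma conj_eigenvector_first_col:
  fixes A W :: "complex mat"
  assumes A: "A \<in> carrier_mat n n" and W: "unitary_mat n W" and Wv: "\<forall>p<n. W $$ (p,0) = c * v $ p"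
    and v: "v \<in> carrier_vec n" and ev: "A *\<^sub>v v = e \<cdot>\<^sub>v v" and n: "0 < n" and p: "p < n"
  shows "(mat_adjoint W * A * W) $$ (p,0) = (if p = 0 then e else 0)"
proof -
  have Wm: "W \<in> carrier_mat n n" using W unitary_mat_carrier by auto
  have AW: "(\<Sum>l<n. A $$ (k,l) * W $$ (l,0)) = e * W $$ (k,0)" if k: "k < n" for k
  proof -
    have "(\<Sum>l<n. A $$ (k,l) * v $ l) = e * v $ k"
      using arg_cong[OF ev, of "\<lambda>w. w $ k"] A v k by (simp add: scalar_prod_def atLeast0LessThan)
    then have "c * (\<Sum>l<n. A $$ (k,l) * v $ l) = e * (c * v $ k)" by simp
    then show ?thesis using Wv k by (simp add: sum_distrib_left algebra_simps)
  qed
  have "(mat_adjoint W * A * W) $$ (p,0) = (\<Sum>k<n. \<Sum>l<n. cnj (W $$ (k,p)) * A $$ (k,l) * W $$ (l,0))"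
    by (rule index_adjoint_mult_mult[OF Wm A Wm p n])
  also have "\<dots> = e * (\<Sum>k<n. cnj (W $$ (k,p)) * W $$ (k,0))"
    unfolding sum_distrib_left
  proof (rule sum.cong[OF refl])
    fix k assume "k \<in> {..<n}"
    then have "(\<Sum>l<n. cnj (W $$ (k,p)) * A $$ (k,l) * W $$ (l,0)) = cnj (W $$ (k,p)) * (e * W $$ (k,0))"
      by (simp add: AW[symmetric] sum_distrib_left algebra_simps)
    then show "(\<Sum>l<n. cnj (W $$ (k,p)) * A $$ (k,l) * W $$ (l,0)) = e * (cnj (W $$ (k,p)) * W $$ (k,0))"
      by (simp add: algebra_simps)
  qed
  also have "\<dots> = e * (mat_adjoint W * W) $$ (p,0)"
    using Wm p n by (subst index_mult_mat_sum[of _ n n _ n]) auto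
  also have "\<dots> = (if p = 0 then e else 0)" using W p n unfolding unitary_mat_def by simp
  finally show ?thesis .
qed

lemma mat_adjoint_zero[simp]: "mat_adjoint (0\<^sub>m n m :: complex mat) = 0\<^sub>m m n"
  by (rule eq_matI) auto

lemma mat_adjoint_four_block_mat:
  fixes A B C D :: "complex mat"
  assumes "A \<in> carrier_mat nr1 nc1" "B \<in> carrier_mat nr1 nc2"
    "C \<in> carrier_mat nr2 nc1" "D \<in> carrier_mat nr2 nc2"
  shows "mat_adjoint (four_block_mat A B C D) =
    four_block_mat (mat_adjoint A) (mat_adjoint C) (mat_adjoint B) (mat_adjoint D)"
  by (rule eq_matI) (use assms in auto)

lemma diagonal_four_block_mat:
  assumes "A \<in> carrier_mat n1 n1" "D \<in> carrier_mat n2 n2" "diagonal_mat A" "diagonal_mat D"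
  shows "diagonal_mat (four_block_mat A (0\<^sub>m n1 n2) (0\<^sub>m n2 n1) D)"
  unfolding diagonal_mat_def
proof (intro allI impI)
  fix i j assume "i < dim_row (four_block_mat A (0\<^sub>m n1 n2) (0\<^sub>m n2 n1) D)"
    "j < dim_col (four_block_mat A (0\<^sub>m n1 n2) (0\<^sub>m n2 n1) D)" "i \<noteq> j"
  moreover have "i - n1 \<noteq> j - n1" if "\<not> i < n1" "\<not> j < n1" using that \<open>i \<noteq> j\<close> by linarith
  ultimately show "four_block_mat A (0\<^sub>m n1 n2) (0\<^sub>m n2 n1) D $$ (i, j) = 0"
    using assms unfolding diagonal_mat_def by auto
qed

lemma mult_four_block_diag_mat:
  fixes A B C D :: "'a :: comm_ring_1 mat"
  assumes A: "A \<in> carrier_mat n1 n1" and B: "B \<in> carrier_mat n2 n2"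
    and C: "C \<in> carrier_mat n1 n1" and D: "D \<in> carrier_mat n2 n2"
  shows "four_block_mat A (0\<^sub>m n1 n2) (0\<^sub>m n2 n1) B * four_block_mat C (0\<^sub>m n1 n2) (0\<^sub>m n2 n1) D
    = four_block_mat (A * C) (0\<^sub>m n1 n2) (0\<^sub>m n2 n1) (B * D)"
  by (subst mult_four_block_mat[OF A zero_carrier_mat zero_carrier_mat B C zero_carrier_mat zero_carrier_mat D])
    (use A B C D in simp)

lemma unitary_mat_four_block_one:
  assumes V: "unitary_mat m V"
  shows "unitary_mat (Suc m) (four_block_mat (1\<^sub>m 1) (0\<^sub>m 1 m) (0\<^sub>m m 1) V)"
proof (rule unitary_matI)
  have Vc: "V \<in> carrier_mat m m" using unitary_mat_carrier[OF V] .
  then show "four_block_mat (1\<^sub>m 1) (0\<^sub>m 1 m) (0\<^sub>m m 1) V \<in> carrier_mat (Suc m) (Suc m)"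
    using four_block_carrier_mat[of "1\<^sub>m 1 :: complex mat" 1 1 V m m] by simp
  show "mat_adjoint (four_block_mat (1\<^sub>m 1) (0\<^sub>m 1 m) (0\<^sub>m m 1) V) * four_block_mat (1\<^sub>m 1) (0\<^sub>m 1 m) (0\<^sub>m m 1) V
      = 1\<^sub>m (Suc m)"
    using Vc V four_block_one_mat[of 1 m]
    by (simp add: mat_adjoint_four_block_mat[of _ 1 1 _ m _ m] mult_four_block_diag_mat unitary_mat_def)
qed

lemma hermitian_four_block_split:
  fixes B :: "complex mat"
  assumes B: "B \<in> carrier_mat (Suc m) (Suc m)" and herm: "mat_adjoint B = B"
    and col: "\<forall>p. 0 < p \<and> p < Suc m \<longrightarrow> B $$ (p,0) = 0"
  shows "B = four_block_mat (mat 1 1 (\<lambda>_. B $$ (0,0))) (0\<^sub>m 1 m) (0\<^sub>m m 1)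
               (mat m m (\<lambda>(p,q). B $$ (Suc p, Suc q)))"
proof (rule eq_matI)
  fix i j assume "i < dim_row (four_block_mat (mat 1 1 (\<lambda>_. B $$ (0,0))) (0\<^sub>m 1 m) (0\<^sub>m m 1)
               (mat m m (\<lambda>(p,q). B $$ (Suc p, Suc q))))"
    "j < dim_col (four_block_mat (mat 1 1 (\<lambda>_. B $$ (0,0))) (0\<^sub>m 1 m) (0\<^sub>m m 1)
               (mat m m (\<lambda>(p,q). B $$ (Suc p, Suc q))))"
  then have i: "i < Suc m" and j: "j < Suc m" by auto
  have row: "B $$ (0,j) = 0" if "0 < j" using hermitian_index[OF B herm, of j 0] col that j by simp
  show "B $$ (i,j) = four_block_mat (mat 1 1 (\<lambda>_. B $$ (0,0))) (0\<^sub>m 1 m) (0\<^sub>m m 1)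
               (mat m m (\<lambda>(p,q). B $$ (Suc p, Suc q))) $$ (i,j)"
    using i j col row by (cases i; cases j) auto
qed (use B in auto)

lemma hermitian_lower_right:
  fixes B :: "complex mat"
  assumes B: "B \<in> carrier_mat (Suc m) (Suc m)" and herm: "mat_adjoint B = B"
  shows "mat_adjoint (mat m m (\<lambda>(p,q). B $$ (Suc p, Suc q))) = mat m m (\<lambda>(p,q). B $$ (Suc p, Suc q))"
proof (rule eq_matI)
  fix p q assume "p < dim_row (mat m m (\<lambda>(p,q). B $$ (Suc p, Suc q)))"
    "q < dim_col (mat m m (\<lambda>(p,q). B $$ (Suc p, Suc q)))"
  then have p: "p < m" and q: "q < m" by auto
  then have "cnj (B $$ (Suc q, Suc p)) = B $$ (Suc p, Suc q)"
    using hermitian_index[OF B herm, of "Suc q" "Suc p"] by simp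
  then show "mat_adjoint (mat m m (\<lambda>(p,q). B $$ (Suc p, Suc q))) $$ (p,q) =
      mat m m (\<lambda>(p,q). B $$ (Suc p, Suc q)) $$ (p,q)"
    using p q by simp
qed auto

theorem hermitian_unitarily_diagonalizable:
  fixes A :: "complex mat"
  shows "A \<in> carrier_mat n n \<Longrightarrow> mat_adjoint A = A \<Longrightarrow>
    \<exists>Q. unitary_mat n Q \<and> diagonal_mat (mat_adjoint Q * A * Q)"
proof (induction n arbitrary: A)
  case 0
  then show ?case using unitary_mat_one[of 0] by (auto simp: diagonal_mat_def)
next
  case (Suc m)
  have A: "A \<in> carrier_mat (Suc m) (Suc m)" and herm: "mat_adjoint A = A" using Suc.prems by auto
  obtain e v where v: "v \<in> carrier_vec (Suc m)" "v \<noteq> 0\<^sub>v (Suc m)" and ev: "A *\<^sub>v v = e \<cdot>\<^sub>v v"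
    using eigenvector_exists[OF A] by auto
  obtain W c where W: "unitary_mat (Suc m) W" and Wv: "\<forall>p<Suc m. W $$ (p,0) = c * v $ p"
    using unitary_mat_first_col[OF v] by blast
  have Wc: "W \<in> carrier_mat (Suc m) (Suc m)" using unitary_mat_carrier[OF W] .
  define B where "B = mat_adjoint W * A * W"
  define C where "C = mat m m (\<lambda>(p,q). B $$ (Suc p, Suc q))"
  have Bc: "B \<in> carrier_mat (Suc m) (Suc m)" unfolding B_def using unitary_conj_carrier[OF W A] .
  have hB: "mat_adjoint B = B" unfolding B_def by (rule hermitian_conj[OF Wc A herm])
  have "B $$ (p,0) = 0" if "0 < p" "p < Suc m" for p
    using conj_eigenvector_first_col[OF A W Wv v(1) ev _ that(2)] that unfolding B_def by simp
  then have B_split: "B = four_block_mat (mat 1 1 (\<lambda>_. B $$ (0,0))) (0\<^sub>m 1 m) (0\<^sub>m m 1) C"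
    unfolding C_def using hermitian_four_block_split[OF Bc hB] by blast
  have Cc: "C \<in> carrier_mat m m" unfolding C_def by simp
  have hC: "mat_adjoint C = C" unfolding C_def by (rule hermitian_lower_right[OF Bc hB])
  obtain VC where VC: "unitary_mat m VC" and D: "diagonal_mat (mat_adjoint VC * C * VC)"
    using Suc.IH[OF Cc hC] by blast
  have VCc: "VC \<in> carrier_mat m m" using unitary_mat_carrier[OF VC] .
  define V where "V = four_block_mat (1\<^sub>m 1) (0\<^sub>m 1 m) (0\<^sub>m m 1) VC"
  have V: "unitary_mat (Suc m) V" unfolding V_def by (rule unitary_mat_four_block_one[OF VC])
  have "mat_adjoint V * B * V = four_block_mat (mat 1 1 (\<lambda>_. B $$ (0,0))) (0\<^sub>m 1 m) (0\<^sub>m m 1)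
      (mat_adjoint VC * C * VC)"
    using VCc Cc mult_carrier_mat[OF mat_adjoint_carrier_mat[OF VCc] Cc] unfolding V_def
    by (subst B_split) (simp add: mat_adjoint_four_block_mat[of _ 1 1 _ m _ m] mult_four_block_diag_mat)
  moreover have "diagonal_mat (mat 1 1 (\<lambda>_. B $$ (0,0)))" by (simp add: diagonal_mat_def)
  ultimately have "diagonal_mat (mat_adjoint V * B * V)"
    using diagonal_four_block_mat[OF _ unitary_conj_carrier[OF VC Cc] _ D] by simp
  moreover have "mat_adjoint (W * V) * A * (W * V) = mat_adjoint V * B * V"
    unfolding B_def by (rule mat_adjoint_conj_mult[OF Wc unitary_mat_carrier[OF V] A])
  ultimately show ?case using unitary_mat_mult[OF W V] by metis
qed

section \<open>Majorization\<close>

definition nonincreasing_upto :: "nat \<Rightarrow> (nat \<Rightarrow> real) \<Rightarrow> bool" where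
  "nonincreasing_upto n x \<longleftrightarrow> (\<forall>p q. p \<le> q \<longrightarrow> q < n \<longrightarrow> x q \<le> x p)"

lemma nonincreasing_uptoD: "nonincreasing_upto n x \<Longrightarrow> p \<le> q \<Longrightarrow> q < n \<Longrightarrow> x q \<le> x p"
  unfolding nonincreasing_upto_def by blast

lemma nonincreasing_uptoI_Suc:
  assumes "\<And>p. Suc p < n \<Longrightarrow> x (Suc p) \<le> x p"
  shows "nonincreasing_upto n x"
  unfolding nonincreasing_upto_def
proof (intro allI impI)
  fix p q assume "p \<le> q" "q < n"
  then show "x q \<le> x p"
    by (induction q rule: dec_induct) (use assms order_trans in fastforce)+
qed

lemma exists_sorting_permutation: "\<exists>\<sigma>. \<sigma> permutes {..<n} \<and> nonincreasing_upto n (y \<circ> \<sigma>)"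
proof -
  define xs where "xs = sort_key (\<lambda>i. - y i) [0..<n]"
  have m: "mset xs = mset [0..<n]" unfolding xs_def by simp
  obtain p where p: "p permutes {..<length [0..<n]}" "permute_list p [0..<n] = xs"
    using mset_eq_permutation[OF m] by blast
  have pn: "p permutes {..<n}" using p by simp
  have len: "length xs = n" using m by (metis length_upt minus_nat.diff_0 size_mset)
  have xsi: "xs ! i = p i" if "i < n" for i
    using p permute_list_nth[of p "[0..<n]" i] permutes_in_image[OF pn] that by simp
  have s: "sorted (map (\<lambda>i. - y i) xs)" unfolding xs_def by (rule sorted_sort_key)
  have "nonincreasing_upto n (y \<circ> p)" unfolding nonincreasing_upto_def
  proof (intro allI impI)
    fix a b assume ab: "a \<le> b" "b < n"
    have "map (\<lambda>i. - y i) xs ! a \<le> map (\<lambda>i. - y i) xs ! b"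
      using sorted_nth_mono[OF s ab(1)] ab len by simp
    then show "(y \<circ> p) b \<le> (y \<circ> p) a" using ab len xsi by simp
  qed
  then show ?thesis using pn by blast
qed

text \<open>
  For nonincreasing x this is the usual majorization of y by x: any l entries of y sum to at
  most x 0 + \<dots> + x (l - 1), with equality for all n entries.
\<close>

definition majorized :: "nat \<Rightarrow> (nat \<Rightarrow> real) \<Rightarrow> (nat \<Rightarrow> real) \<Rightarrow> bool" where
  "majorized n y x \<longleftrightarrow> (\<Sum>k<n. y k) = (\<Sum>k<n. x k) \<and>
     (\<forall>I \<subseteq> {..<n}. (\<Sum>k\<in>I. y k) \<le> (\<Sum>k<card I. x k))"

lemma majorized_convex:
  assumes y: "majorized n y x" and z: "majorized n z x" and t: "0 \<le> t" "t \<le> 1"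
  shows "majorized n (\<lambda>k. (1 - t) * y k + t * z k) x"
  unfolding majorized_def
proof (intro conjI allI impI)
  have "(\<Sum>k<n. (1 - t) * y k + t * z k) = (1 - t) * (\<Sum>k<n. y k) + t * (\<Sum>k<n. z k)"
    by (simp add: sum.distrib sum_distrib_left)
  then show "(\<Sum>k<n. (1 - t) * y k + t * z k) = (\<Sum>k<n. x k)"
    using y z unfolding majorized_def by (simp add: algebra_simps)
  fix I assume I: "I \<subseteq> {..<n}"
  have "(\<Sum>k\<in>I. (1 - t) * y k + t * z k) = (1 - t) * (\<Sum>k\<in>I. y k) + t * (\<Sum>k\<in>I. z k)"
    by (simp add: sum.distrib sum_distrib_left)
  also have "\<dots> \<le> (1 - t) * (\<Sum>k<card I. x k) + t * (\<Sum>k<card I. x k)"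
    using y z I t unfolding majorized_def by (intro add_mono mult_left_mono) auto
  also have "\<dots> = (\<Sum>k<card I. x k)" by (simp add: algebra_simps)
  finally show "(\<Sum>k\<in>I. (1 - t) * y k + t * z k) \<le> (\<Sum>k<card I. x k)" .
qed

lemma weighted_sum_le_top_sum:
  assumes x: "nonincreasing_upto n x" and c: "\<forall>j<n. 0 \<le> c j \<and> c j \<le> 1"
    and c_sum: "(\<Sum>j<n. c j) = real m" and mn: "m \<le> n"
  shows "(\<Sum>j<n. c j * x j) \<le> (\<Sum>j<m. x j)"
proof (cases "m = n")
  case True
  have "(\<Sum>j<n. 1 - c j) = 0" using c_sum True by (simp add: sum_subtractf)
  then have "\<forall>j<n. c j = 1" using c sum_nonneg_eq_0_iff[of "{..<n}" "\<lambda>j. 1 - c j"] by simp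
  then show ?thesis using True by simp
next
  case False
  then have mn': "m < n" using mn by simp
  have sum_lt_m: "(\<Sum>j<n. if j < m then f j else 0) = (\<Sum>j<m. f j)" for f :: "nat \<Rightarrow> real"
  proof -
    have "(\<Sum>j<n. if j < m then f j else 0) = (\<Sum>j\<in>{..<n} \<inter> {j. j < m}. f j)"
      by (simp add: sum.inter_restrict)
    also have "{..<n} \<inter> {j. j < m} = {..<m}" using mn by auto
    finally show ?thesis .
  qed
  \<comment> \<open>compare termwise with the threshold value x m\<close>
  have "(c j - (if j < m then 1 else 0)) * (x j - x m) \<le> 0" if "j < n" for j
    using c that nonincreasing_uptoD[OF x, of j m] nonincreasing_uptoD[OF x, of m j] mn'
    by (cases "j < m") (auto intro: mult_nonpos_nonneg mult_nonneg_nonpos)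
  then have "(\<Sum>j<n. (c j - (if j < m then 1 else 0)) * (x j - x m)) \<le> 0"
    by (intro sum_nonpos) auto
  moreover have "(\<Sum>j<n. (c j - (if j < m then 1 else 0)) * (x j - x m)) =
     (\<Sum>j<n. c j * x j) - (\<Sum>j<n. if j < m then x j else 0) - x m * (\<Sum>j<n. c j)
       + x m * (\<Sum>j<n. if j < m then 1 else 0)"
  proof -
    have "(c j - (if j < m then 1 else 0)) * (x j - x m) =
        c j * x j - (if j < m then x j else 0) - x m * c j + x m * (if j < m then 1 else 0)" for j
      by (cases "j < m") (simp_all add: algebra_simps)
    then show ?thesis by (simp only: sum.distrib sum_subtractf sum_distrib_left)
  qed
  ultimately show ?thesis using c_sum sum_lt_m[of x] sum_lt_m[of "\<lambda>_. 1"] by simp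
qed

definition t_transform :: "nat \<Rightarrow> nat \<Rightarrow> real \<Rightarrow> (nat \<Rightarrow> real) \<Rightarrow> nat \<Rightarrow> real" where
  "t_transform i j s x = x(i := (1 - s) * x i + s * x j, j := s * x i + (1 - s) * x j)"

lemma sum_lessThan_split:
  fixes f :: "nat \<Rightarrow> real"
  shows "m \<le> l \<Longrightarrow> (\<Sum>k<l. f k) = (\<Sum>k<m. f k) + (\<Sum>k\<in>{m..<l}. f k)"
  using sum.atLeastLessThan_concat[of 0 m l f] by (simp add: atLeast0LessThan[symmetric])

lemma transfer_indices_exist:
  fixes x y :: "nat \<Rightarrow> real"
  assumes prefix: "\<forall>l\<le>n. (\<Sum>k<l. y k) \<le> (\<Sum>k<l. x k)" and total: "(\<Sum>k<n. y k) = (\<Sum>k<n. x k)"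
    and differ: "\<exists>k<n. x k \<noteq> y k"
  shows "\<exists>j k. j < k \<and> k < n \<and> y j < x j \<and> x k < y k \<and> (\<forall>i. j < i \<and> i < k \<longrightarrow> x i = y i)"
proof -
  define J where "J = {k. k < n \<and> y k < x k}"
  have "J \<noteq> {}"
  proof
    assume "J = {}"
    then have le: "\<forall>k\<in>{..<n}. x k \<le> y k" unfolding J_def by force
    with differ obtain k0 where "k0 < n" "x k0 < y k0" by force
    then have "(\<Sum>k<n. x k) < (\<Sum>k<n. y k)" using le by (intro sum_strict_mono_ex1) auto
    then show False using total by simp
  qed
  define j where "j = Max J"
  have "j \<in> J" unfolding j_def using \<open>J \<noteq> {}\<close> by (intro Max_in) (auto simp: J_def)
  then have jn: "j < n" and yj: "y j < x j" unfolding J_def by auto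
  have finJ: "finite J" unfolding J_def by simp
  have above: "x i \<le> y i" if "j < i" "i < n" for i
  proof (rule ccontr)
    assume "\<not> x i \<le> y i"
    then have "i \<in> J" using that unfolding J_def by auto
    then show False using Max_ge[OF finJ, of i] that unfolding j_def by simp
  qed
  define K where "K = {k. j < k \<and> k < n \<and> x k < y k}"
  have "K \<noteq> {}"
  proof
    assume "K = {}"
    then have "(\<Sum>k\<in>{Suc j..<n}. x k) = (\<Sum>k\<in>{Suc j..<n}. y k)"
    proof (intro sum.cong refl)
      fix i assume "i \<in> {Suc j..<n}"
      then show "x i = y i" using above[of i] \<open>K = {}\<close> unfolding K_def by force
    qed
    moreover have "(\<Sum>k<j. y k) \<le> (\<Sum>k<j. x k)" using prefix jn by simp
    ultimately show False
      using total yj jn sum_lessThan_split[of "Suc j" n x] sum_lessThan_split[of "Suc j" n y] by simp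
  qed
  define k where "k = Min K"
  have "k \<in> K" unfolding k_def using \<open>K \<noteq> {}\<close> by (intro Min_in) (auto simp: K_def)
  then have jk: "j < k" and kn: "k < n" and yk: "x k < y k" unfolding K_def by auto
  have finK: "finite K" unfolding K_def by simp
  have "x i = y i" if "j < i" "i < k" for i
  proof (rule ccontr)
    assume "x i \<noteq> y i"
    then have "i \<in> K" using that above[of i] kn unfolding K_def by auto
    then show False using Min_le[OF finK, of i] that unfolding k_def by simp
  qed
  then show ?thesis using jk kn yj yk by blast
qed

lemma transfer_step:
  assumes x: "nonincreasing_upto n x" and y: "nonincreasing_upto n y"
    and prefix: "\<forall>l\<le>n. (\<Sum>k<l. y k) \<le> (\<Sum>k<l. x k)"
    and jk: "j < k" "k < n" and yj: "y j < x j" and yk: "x k < y k"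
    and mid: "\<forall>i. j < i \<and> i < k \<longrightarrow> x i = y i"
    and \<delta>: "\<delta> = min (x j - y j) (y k - x k)"
  defines "x' \<equiv> x(j := x j - \<delta>, k := x k + \<delta>)"
  shows "nonincreasing_upto n x'" and "\<forall>l\<le>n. (\<Sum>k<l. y k) \<le> (\<Sum>k<l. x' k)"
    and "(\<Sum>k<n. x' k) = (\<Sum>k<n. x k)"
    and "x' j = y j \<or> x' k = y k"
proof -
  have \<delta>pos: "0 < \<delta>" and \<delta>j: "\<delta> \<le> x j - y j" and \<delta>k: "\<delta> \<le> y k - x k"
    using \<delta> yj yk by auto
  have y_jk: "y k \<le> y j" using nonincreasing_uptoD[OF y, of j k] jk by simp
  show "nonincreasing_upto n x'"
  proof (rule nonincreasing_uptoI_Suc)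
    fix p assume p: "Suc p < n"
    have xp: "x (Suc p) \<le> x p" and yp: "y (Suc p) \<le> y p" using p x y by (auto intro: nonincreasing_uptoD)
    consider "Suc p = j" | "p = j" "Suc p = k" | "p = j" "Suc p < k" | "j < p" "Suc p = k"
      | "p = k" | "Suc p \<noteq> j" "Suc p \<noteq> k" "p \<noteq> j" "p \<noteq> k"
      using jk by linarith
    then show "x' (Suc p) \<le> x' p"
    proof cases
      case 3
      then show ?thesis using xp yp mid \<delta>j jk unfolding x'_def by auto
    next
      case 4
      then show ?thesis using xp yp mid[rule_format, of p] \<delta>k jk unfolding x'_def by auto
    qed (use xp y_jk \<delta>j \<delta>k \<delta>pos jk in \<open>auto simp: x'_def\<close>)
  qed
  have x'_sum: "(\<Sum>i<l. x' i) = (\<Sum>i<l. x i) + (if k < l then \<delta> else 0) - (if j < l then \<delta> else 0)" for l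
  proof -
    have "x' i = x i + (if i = k then \<delta> else 0) - (if i = j then \<delta> else 0)" for i
      unfolding x'_def using jk by auto
    then show ?thesis by (simp add: sum.distrib sum_subtractf)
  qed
  show "\<forall>l\<le>n. (\<Sum>k<l. y k) \<le> (\<Sum>k<l. x' k)"
  proof (intro allI impI)
    fix l assume ln: "l \<le> n"
    show "(\<Sum>k<l. y k) \<le> (\<Sum>k<l. x' k)"
    proof (cases "j < l \<and> l \<le> k")
      case True
      \<comment> \<open>between j and k the prefix sums of x exceed those of y by at least x j - y j\<close>
      have "(\<Sum>i\<in>{Suc j..<l}. x i) = (\<Sum>i\<in>{Suc j..<l}. y i)"
        using True mid by (intro sum.cong refl) auto
      moreover have "(\<Sum>i<j. y i) \<le> (\<Sum>i<j. x i)" using prefix jk by simp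
      ultimately have "(\<Sum>i<l. y i) + \<delta> \<le> (\<Sum>i<l. x i)"
        using True \<delta>j sum_lessThan_split[of "Suc j" l x] sum_lessThan_split[of "Suc j" l y] by simp
      then show ?thesis using x'_sum[of l] True jk by simp
    qed (use x'_sum[of l] prefix ln jk in auto)
  qed
  show "(\<Sum>k<n. x' k) = (\<Sum>k<n. x k)" using x'_sum[of n] jk by simp
  show "x' j = y j \<or> x' k = y k" using \<delta> jk unfolding x'_def by (auto simp: min_def)
qed

lemma t_transform_closed_contains_majorized:
  fixes D :: "(nat \<Rightarrow> real) set"
  assumes closed: "\<And>x i j s. x \<in> D \<Longrightarrow> i < n \<Longrightarrow> j < n \<Longrightarrow> i \<noteq> j \<Longrightarrow> 0 \<le> s \<Longrightarrow> s \<le> 1 \<Longrightarrow>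
      t_transform i j s x \<in> D"
    and congr: "\<And>x y. x \<in> D \<Longrightarrow> \<forall>k<n. y k = x k \<Longrightarrow> y \<in> D"
  shows "x \<in> D \<Longrightarrow> nonincreasing_upto n x \<Longrightarrow> nonincreasing_upto n y \<Longrightarrow>
    \<forall>l\<le>n. (\<Sum>k<l. y k) \<le> (\<Sum>k<l. x k) \<Longrightarrow> (\<Sum>k<n. y k) = (\<Sum>k<n. x k) \<Longrightarrow> y \<in> D"
proof (induction "card {k. k < n \<and> x k \<noteq> y k}" arbitrary: x rule: less_induct)
  case less
  note xD = less.prems(1) and x = less.prems(2) and y = less.prems(3)
    and prefix = less.prems(4) and total = less.prems(5)
  show ?case
  proof (cases "\<forall>k<n. x k = y k")
    case True
    then show ?thesis using congr[OF xD] by simp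
  next
    case False
    then obtain j k where jk: "j < k" "k < n" and yj: "y j < x j" and yk: "x k < y k"
      and mid: "\<forall>i. j < i \<and> i < k \<longrightarrow> x i = y i"
      using transfer_indices_exist[OF prefix total] by blast
    define \<delta> where "\<delta> = min (x j - y j) (y k - x k)"
    define x' where "x' = x(j := x j - \<delta>, k := x k + \<delta>)"
    note step = transfer_step[OF x y prefix jk yj yk mid \<delta>_def, folded x'_def]
    \<comment> \<open>moving \<delta> from x j to x k is the T-transform with weight s\<close>
    define s where "s = \<delta> / (x j - x k)"
    have xjk: "x k < x j" using yj yk nonincreasing_uptoD[OF y, of j k] jk by simp
    have s: "0 \<le> s" "s \<le> 1" and s\<delta>: "s * (x j - x k) = \<delta>"
      using xjk yj yk nonincreasing_uptoD[OF y, of j k] jk unfolding s_def \<delta>_def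
      by (auto simp: divide_le_eq)
    have "t_transform j k s x = x'"
      unfolding t_transform_def x'_def using s\<delta> by (simp add: algebra_simps)
    then have x'D: "x' \<in> D" using closed[OF xD _ _ _ s, of j k] jk by simp
    have "{i. i < n \<and> x' i \<noteq> y i} \<subseteq> {i. i < n \<and> x i \<noteq> y i}"
      using yj yk unfolding x'_def by auto
    moreover have "j \<notin> {i. i < n \<and> x' i \<noteq> y i} \<or> k \<notin> {i. i < n \<and> x' i \<noteq> y i}"
      using step(4) by blast
    moreover have "j \<in> {i. i < n \<and> x i \<noteq> y i}" "k \<in> {i. i < n \<and> x i \<noteq> y i}"
      using jk yj yk by auto
    ultimately have "{i. i < n \<and> x' i \<noteq> y i} \<subset> {i. i < n \<and> x i \<noteq> y i}" by blast
    then have "card {i. i < n \<and> x' i \<noteq> y i} < card {i. i < n \<and> x i \<noteq> y i}"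
      by (intro psubset_card_mono) simp_all
    then show ?thesis
      using less.hyps[OF _ x'D step(1) y step(2)] step(3) total by simp
  qed
qed

section \<open>Plane rotations\<close>

lemma sum_two_points:
  fixes i j n :: nat
  assumes "i \<noteq> j" "i < n" "j < n" "\<And>p. p < n \<Longrightarrow> p \<noteq> i \<Longrightarrow> p \<noteq> j \<Longrightarrow> g p = 0"
  shows "(\<Sum>p<n. g p) = g i + (g j :: complex)"
proof -
  have "(\<Sum>p<n. g p) = (\<Sum>p\<in>{i,j}. g p)"
    by (rule sum.mono_neutral_right) (use assms in auto)
  also have "\<dots> = g i + g j" using assms by simp
  finally show ?thesis .
qed

definition plane_rot :: "nat \<Rightarrow> nat \<Rightarrow> nat \<Rightarrow> real \<Rightarrow> complex mat" where
  "plane_rot n i j \<theta> = mat n n (\<lambda>(p,q).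
     if p = q then (if p = i \<or> p = j then of_real (cos \<theta>) else 1)
     else if p = i \<and> q = j then of_real (sin \<theta>)
     else if p = j \<and> q = i then - of_real (sin \<theta>) else 0)"

lemma plane_rot_carrier: "plane_rot n i j \<theta> \<in> carrier_mat n n"
  unfolding plane_rot_def by simp

lemma dim_plane_rot[simp]: "dim_row (plane_rot n i j \<theta>) = n" "dim_col (plane_rot n i j \<theta>) = n"
  unfolding plane_rot_def by simp_all

context
  fixes n i j :: nat and \<theta> :: real
  assumes ij: "i \<noteq> j" "i < n" "j < n"
begin

lemma plane_rot_col_i:
  "p < n \<Longrightarrow> plane_rot n i j \<theta> $$ (p,i) =
     (if p = i then of_real (cos \<theta>) else if p = j then - of_real (sin \<theta>) else 0)"
  unfolding plane_rot_def using ij by auto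

lemma plane_rot_col_j:
  "p < n \<Longrightarrow> plane_rot n i j \<theta> $$ (p,j) =
     (if p = i then of_real (sin \<theta>) else if p = j then of_real (cos \<theta>) else 0)"
  unfolding plane_rot_def using ij by auto

lemma plane_rot_col_other:
  "p < n \<Longrightarrow> k < n \<Longrightarrow> k \<noteq> i \<Longrightarrow> k \<noteq> j \<Longrightarrow> plane_rot n i j \<theta> $$ (p,k) = (if p = k then 1 else 0)"
  unfolding plane_rot_def using ij by auto

lemma of_real_cos_sin_sq: "of_real (cos \<theta>) * of_real (cos \<theta>) + of_real (sin \<theta>) * of_real (sin \<theta>) = (1 :: complex)"
proof -
  have "of_real (cos \<theta>) * of_real (cos \<theta>) + of_real (sin \<theta>) * of_real (sin \<theta>)
     = (of_real ((sin \<theta>)\<^sup>2 + (cos \<theta>)\<^sup>2) :: complex)" by (simp add: power2_eq_square)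
  then show ?thesis by simp
qed

lemma unitary_plane_rot: "unitary_mat n (plane_rot n i j \<theta>)"
proof (rule unitary_matI[OF plane_rot_carrier])
  let ?R = "plane_rot n i j \<theta>"
  show "mat_adjoint ?R * ?R = 1\<^sub>m n"
  proof (rule eq_matI)
    fix k l assume "k < dim_row (1\<^sub>m n :: complex mat)" "l < dim_col (1\<^sub>m n :: complex mat)"
    then have k: "k < n" and l: "l < n" by auto
    have e: "(mat_adjoint ?R * ?R) $$ (k,l) = (\<Sum>p<n. cnj (?R $$ (p,k)) * ?R $$ (p,l))"
      using index_mult_mat_sum[of "mat_adjoint ?R" n n ?R n k l] plane_rot_carrier k l by simp
    have "(\<Sum>p<n. cnj (?R $$ (p,k)) * ?R $$ (p,l)) = (if k = l then 1 else 0)"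
    proof (cases "k \<in> {i,j}")
      case kin: True
      show ?thesis
      proof (cases "l \<in> {i,j}")
        case True
        have "(\<Sum>p<n. cnj (?R $$ (p,k)) * ?R $$ (p,l)) = cnj (?R $$ (i,k)) * ?R $$ (i,l) + cnj (?R $$ (j,k)) * ?R $$ (j,l)"
          by (rule sum_two_points) (use ij kin in \<open>auto simp: plane_rot_col_i plane_rot_col_j\<close>)
        also have "\<dots> = (if k = l then 1 else 0)"
          using kin True ij of_real_cos_sin_sq by (auto simp: plane_rot_col_i plane_rot_col_j mult.commute add.commute)
        finally show ?thesis .
      next
        case False
        have "(\<Sum>p<n. cnj (?R $$ (p,k)) * ?R $$ (p,l)) = (\<Sum>p<n. if p = l then cnj (?R $$ (l,k)) else 0)"
          by (rule sum.cong[OF refl]) (use False l in \<open>auto simp: plane_rot_col_other\<close>)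
        also have "\<dots> = 0" using kin False l ij by (auto simp: plane_rot_col_i plane_rot_col_j)
        finally show ?thesis using kin False by auto
      qed
    next
      case False
      have "(\<Sum>p<n. cnj (?R $$ (p,k)) * ?R $$ (p,l)) = (\<Sum>p<n. if p = k then ?R $$ (k,l) else 0)"
        by (rule sum.cong[OF refl]) (use False k in \<open>auto simp: plane_rot_col_other\<close>)
      also have "\<dots> = ?R $$ (k,l)" using k by simp
      also have "\<dots> = (if k = l then 1 else 0)" using False k l ij unfolding plane_rot_def by auto
      finally show ?thesis .
    qed
    then show "(mat_adjoint ?R * ?R) $$ (k,l) = (1\<^sub>m n :: complex mat) $$ (k,l)" using e k l by simp
  qed (use plane_rot_carrier in auto)
qed

lemma diag_plane_rot_conj:
  assumes A: "A \<in> carrier_mat n n" and k: "k < n"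
  shows "(mat_adjoint (plane_rot n i j \<theta>) * A * plane_rot n i j \<theta>) $$ (k,k) =
    (if k = i then of_real (cos \<theta>) * of_real (cos \<theta>) * A $$ (i,i)
         + of_real (sin \<theta>) * of_real (sin \<theta>) * A $$ (j,j)
         - of_real (cos \<theta>) * of_real (sin \<theta>) * (A $$ (i,j) + A $$ (j,i))
     else if k = j then of_real (sin \<theta>) * of_real (sin \<theta>) * A $$ (i,i)
         + of_real (cos \<theta>) * of_real (cos \<theta>) * A $$ (j,j)
         + of_real (cos \<theta>) * of_real (sin \<theta>) * (A $$ (i,j) + A $$ (j,i))
     else A $$ (k,k))"
proof -
  let ?R = "plane_rot n i j \<theta>"
  have T: "(mat_adjoint ?R * A * ?R) $$ (k,k) = (\<Sum>p<n. \<Sum>q<n. cnj (?R $$ (p,k)) * A $$ (p,q) * ?R $$ (q,k))"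
    by (rule index_adjoint_mult_mult[OF plane_rot_carrier A plane_rot_carrier k k])
  show ?thesis
  proof (cases "k \<in> {i,j}")
    case True
    have inner: "(\<Sum>q<n. cnj (?R $$ (p,k)) * A $$ (p,q) * ?R $$ (q,k)) =
       cnj (?R $$ (p,k)) * A $$ (p,i) * ?R $$ (i,k) + cnj (?R $$ (p,k)) * A $$ (p,j) * ?R $$ (j,k)" for p
      by (rule sum_two_points) (use ij True in \<open>auto simp: plane_rot_col_i plane_rot_col_j\<close>)
    have "(\<Sum>p<n. \<Sum>q<n. cnj (?R $$ (p,k)) * A $$ (p,q) * ?R $$ (q,k)) =
      (\<Sum>p<n. cnj (?R $$ (p,k)) * A $$ (p,i) * ?R $$ (i,k) + cnj (?R $$ (p,k)) * A $$ (p,j) * ?R $$ (j,k))"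
      by (simp only: inner)
    also have "\<dots> = (cnj (?R $$ (i,k)) * A $$ (i,i) * ?R $$ (i,k) + cnj (?R $$ (i,k)) * A $$ (i,j) * ?R $$ (j,k))
       + (cnj (?R $$ (j,k)) * A $$ (j,i) * ?R $$ (i,k) + cnj (?R $$ (j,k)) * A $$ (j,j) * ?R $$ (j,k))"
      by (rule sum_two_points) (use ij True in \<open>auto simp: plane_rot_col_i plane_rot_col_j\<close>)
    finally have S: "(\<Sum>p<n. \<Sum>q<n. cnj (?R $$ (p,k)) * A $$ (p,q) * ?R $$ (q,k)) = \<dots>" .
    show ?thesis
    proof (cases "k = i")
      case True
      then show ?thesis using T S ij by (simp add: plane_rot_col_i algebra_simps)
    next
      case False
      then have "k = j" using \<open>k \<in> {i,j}\<close> by simp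
      then show ?thesis using T S ij by (simp add: plane_rot_col_j algebra_simps)
    qed
  next
    case False
    have inner: "(\<Sum>q<n. cnj (?R $$ (p,k)) * A $$ (p,q) * ?R $$ (q,k)) = cnj (?R $$ (p,k)) * A $$ (p,k)" for p
    proof -
      have "(\<Sum>q<n. cnj (?R $$ (p,k)) * A $$ (p,q) * ?R $$ (q,k)) = (\<Sum>q<n. if q = k then cnj (?R $$ (p,k)) * A $$ (p,k) else 0)"
        by (rule sum.cong[OF refl]) (use False k in \<open>auto simp: plane_rot_col_other\<close>)
      then show ?thesis using k by simp
    qed
    have "(\<Sum>p<n. \<Sum>q<n. cnj (?R $$ (p,k)) * A $$ (p,q) * ?R $$ (q,k)) =
        (\<Sum>p<n. if p = k then A $$ (k,k) else 0)"
      unfolding inner by (rule sum.cong[OF refl]) (use False k in \<open>auto simp: plane_rot_col_other\<close>)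
    also have "\<dots> = A $$ (k,k)" using k by simp
    finally show ?thesis using T False by simp
  qed
qed

end

lemma rotation_angle_exists:
  fixes a b r t :: real
  assumes t: "0 \<le> t" "t \<le> 1"
  shows "\<exists>\<theta>. cos \<theta> * cos \<theta> * a + sin \<theta> * sin \<theta> * b - cos \<theta> * sin \<theta> * (2 * r) = (1 - t) * a + t * b"
proof -
  define f where "f \<theta> = cos \<theta> * cos \<theta> * a + sin \<theta> * sin \<theta> * b - cos \<theta> * sin \<theta> * (2 * r)" for \<theta>
  have cont: "\<forall>\<theta>. 0 \<le> \<theta> \<and> \<theta> \<le> pi/2 \<longrightarrow> isCont f \<theta>" unfolding f_def by (auto intro!: continuous_intros)
  have f0: "f 0 = a" and f1: "f (pi/2) = b" unfolding f_def by simp_all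
  consider "a \<le> b" | "b \<le> a" by linarith
  then show ?thesis
  proof cases
    case 1
    have "a * t \<le> b * t" "a * (1 - t) \<le> b * (1 - t)" using 1 t by (simp_all add: mult_right_mono)
    then have "f 0 \<le> (1 - t) * a + t * b" "(1 - t) * a + t * b \<le> f (pi/2)"
      unfolding f0 f1 by (simp_all add: algebra_simps)
    then show ?thesis using IVT[of f 0 "(1 - t) * a + t * b" "pi/2"] cont unfolding f_def by fastforce
  next
    case 2
    have "b * t \<le> a * t" "b * (1 - t) \<le> a * (1 - t)" using 2 t by (simp_all add: mult_right_mono)
    then have "f (pi/2) \<le> (1 - t) * a + t * b" "(1 - t) * a + t * b \<le> f 0"
      unfolding f0 f1 by (simp_all add: algebra_simps)
    then show ?thesis using IVT2[of f "pi/2" "(1 - t) * a + t * b" 0] cont unfolding f_def by fastforce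
  qed
qed

lemma diag_t_transform_by_rotation:
  assumes A: "A \<in> carrier_mat n n" and herm: "mat_adjoint A = A"
    and ij: "i \<noteq> j" "i < n" "j < n" and t: "0 \<le> t" "t \<le> 1"
  shows "\<exists>R. unitary_mat n R \<and>
    (\<forall>k<n. (mat_adjoint R * A * R) $$ (k,k) = of_real (t_transform i j t (\<lambda>k. Re (A $$ (k,k))) k))"
proof -
  define a where "a = Re (A $$ (i,i))"
  define b where "b = Re (A $$ (j,j))"
  define r where "r = Re (A $$ (i,j))"
  have real_diag: "A $$ (k,k) = of_real (Re (A $$ (k,k)))" if "k < n" for k
    by (rule hermitian_diag_real[OF A herm that])
  have Aij: "A $$ (i,j) + A $$ (j,i) = of_real (2 * r)"
    using hermitian_index[OF A herm, of i j] ij complex_add_cnj[of "A $$ (i,j)"] unfolding r_def by simp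
  obtain \<theta> where th: "cos \<theta> * cos \<theta> * a + sin \<theta> * sin \<theta> * b - cos \<theta> * sin \<theta> * (2 * r) = (1 - t) * a + t * b"
    using rotation_angle_exists[OF t] by blast
  \<comment> \<open>the two diagonal entries in the plane of rotation keep their sum\<close>
  have th': "sin \<theta> * sin \<theta> * a + cos \<theta> * cos \<theta> * b + cos \<theta> * sin \<theta> * (2 * r) = t * a + (1 - t) * b"
  proof -
    have c2: "cos \<theta> * cos \<theta> = 1 - sin \<theta> * sin \<theta>"
      using sin_cos_squared_add[of \<theta>] by (simp add: power2_eq_square)
    show ?thesis using th unfolding c2 by (simp add: algebra_simps)
  qed
  have "(mat_adjoint (plane_rot n i j \<theta>) * A * plane_rot n i j \<theta>) $$ (k,k) =
      of_real (t_transform i j t (\<lambda>k. Re (A $$ (k,k))) k)" if k: "k < n" for k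
  proof -
    have Aii: "A $$ (i,i) = of_real a" and Ajj: "A $$ (j,j) = of_real b"
      using real_diag ij unfolding a_def b_def by auto
    consider "k = i" | "k = j" | "k \<noteq> i" "k \<noteq> j" by blast
    then show ?thesis
    proof cases
      case 1
      then show ?thesis using ij th unfolding diag_plane_rot_conj[OF ij A k] Aii Ajj Aij t_transform_def
        by (simp add: a_def b_def flip: of_real_mult of_real_add of_real_diff)
    next
      case 2
      then show ?thesis using ij th'
        unfolding diag_plane_rot_conj[OF ij A k] Aii Ajj Aij t_transform_def
        by (simp add: a_def b_def flip: of_real_mult of_real_add)
    next
      case 3
      then show ?thesis using real_diag[OF k] unfolding diag_plane_rot_conj[OF ij A k] t_transform_def by simp
    qed
  qed
  then show ?thesis using unitary_plane_rot[OF ij] by blast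
qed

section \<open>The Schur--Horn theorem\<close>

definition diag_real_mat :: "nat \<Rightarrow> (nat \<Rightarrow> real) \<Rightarrow> complex mat" where
  "diag_real_mat n lam = mat n n (\<lambda>(k,l). if k = l then of_real (lam k) else 0)"

lemma diag_real_mat_carrier: "diag_real_mat n lam \<in> carrier_mat n n"
  unfolding diag_real_mat_def by simp

lemma hermitian_diag_real_mat: "mat_adjoint (diag_real_mat n lam) = diag_real_mat n lam"
  unfolding diag_real_mat_def by (rule eq_matI) auto

lemma hermitian_spectral_sorted:
  assumes S: "S \<in> carrier_mat n n" and herm: "mat_adjoint S = S"
  shows "\<exists>lam. nonincreasing_upto n lam \<and> diag_real_mat n lam \<in> unitary_orbit n S"
proof -
  obtain Q where Q: "unitary_mat n Q" and diag: "diagonal_mat (mat_adjoint Q * S * Q)"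
    using hermitian_unitarily_diagonalizable[OF S herm] by blast
  define A where "A = mat_adjoint Q * S * Q"
  have A_orbit: "A \<in> unitary_orbit n S" unfolding A_def unitary_orbit_def using Q by blast
  have A: "A \<in> carrier_mat n n" and hA: "mat_adjoint A = A"
    using unitary_orbit_carrier[OF A_orbit S] unitary_orbit_hermitian[OF A_orbit S herm] .
  obtain \<sigma> where \<sigma>: "\<sigma> permutes {..<n}" and sorted: "nonincreasing_upto n ((\<lambda>k. Re (A $$ (k,k))) \<circ> \<sigma>)"
    using exists_sorting_permutation by blast
  have "mat_adjoint (perm_mat n \<sigma>) * A * perm_mat n \<sigma> = diag_real_mat n ((\<lambda>k. Re (A $$ (k,k))) \<circ> \<sigma>)"
  proof (rule eq_matI)
    fix k l assume "k < dim_row (diag_real_mat n ((\<lambda>k. Re (A $$ (k,k))) \<circ> \<sigma>))"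
      "l < dim_col (diag_real_mat n ((\<lambda>k. Re (A $$ (k,k))) \<circ> \<sigma>))"
    then have k: "k < n" and l: "l < n" by (auto simp: diag_real_mat_def)
    have "\<sigma> k < n" "\<sigma> l < n" "\<sigma> k = \<sigma> l \<longleftrightarrow> k = l"
      using permutes_in_image[OF \<sigma>] permutes_inj[OF \<sigma>] k l by (auto simp: inj_eq)
    then show "(mat_adjoint (perm_mat n \<sigma>) * A * perm_mat n \<sigma>) $$ (k,l) =
        diag_real_mat n ((\<lambda>k. Re (A $$ (k,k))) \<circ> \<sigma>) $$ (k,l)"
      using diag hermitian_diag_real[OF A hA] k l A unfolding A_def[symmetric] diagonal_mat_def
      by (auto simp: index_perm_mat_conj[OF \<sigma> A k l] diag_real_mat_def)
  qed (use A perm_mat_carrier[of n \<sigma>] in \<open>auto simp: diag_real_mat_def\<close>)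
  then have "diag_real_mat n ((\<lambda>k. Re (A $$ (k,k))) \<circ> \<sigma>) \<in> unitary_orbit n S"
    using unitary_orbit_conj[OF A_orbit unitary_perm_mat[OF \<sigma>] S] by simp
  then show ?thesis using sorted by blast
qed

definition orbit_diagonals :: "nat \<Rightarrow> complex mat \<Rightarrow> (nat \<Rightarrow> real) set" where
  "orbit_diagonals n S = {x. \<exists>A \<in> unitary_orbit n S. \<forall>k<n. A $$ (k,k) = of_real (x k)}"

lemma orbit_diagonals_cong: "x \<in> orbit_diagonals n S \<Longrightarrow> \<forall>k<n. y k = x k \<Longrightarrow> y \<in> orbit_diagonals n S"
  unfolding orbit_diagonals_def by auto

lemma orbit_diagonals_t_transform:
  assumes x: "x \<in> orbit_diagonals n S" and S: "S \<in> carrier_mat n n" and herm: "mat_adjoint S = S"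
    and ij: "i < n" "j < n" "i \<noteq> j" and s: "0 \<le> s" "s \<le> 1"
  shows "t_transform i j s x \<in> orbit_diagonals n S"
proof -
  obtain A where A_orbit: "A \<in> unitary_orbit n S" and xA: "\<forall>k<n. A $$ (k,k) = of_real (x k)"
    using x unfolding orbit_diagonals_def by blast
  obtain R where R: "unitary_mat n R"
    and diag: "\<forall>k<n. (mat_adjoint R * A * R) $$ (k,k) = of_real (t_transform i j s (\<lambda>k. Re (A $$ (k,k))) k)"
    using diag_t_transform_by_rotation[OF unitary_orbit_carrier[OF A_orbit S]
        unitary_orbit_hermitian[OF A_orbit S herm] ij(3,1,2) s] by blast
  have "t_transform i j s (\<lambda>k. Re (A $$ (k,k))) k = t_transform i j s x k" if "k < n" for k
    using xA ij that unfolding t_transform_def by simp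
  then show ?thesis unfolding orbit_diagonals_def
    using unitary_orbit_conj[OF A_orbit R S] diag by auto
qed

lemma orbit_diagonals_permute:
  assumes x: "x \<in> orbit_diagonals n S" and S: "S \<in> carrier_mat n n" and \<sigma>: "\<sigma> permutes {..<n}"
  shows "x \<circ> \<sigma> \<in> orbit_diagonals n S"
proof -
  obtain A where A_orbit: "A \<in> unitary_orbit n S" and xA: "\<forall>k<n. A $$ (k,k) = of_real (x k)"
    using x unfolding orbit_diagonals_def by blast
  have "(mat_adjoint (perm_mat n \<sigma>) * A * perm_mat n \<sigma>) $$ (k,k) = of_real ((x \<circ> \<sigma>) k)" if "k < n" for k
    using index_perm_mat_conj[OF \<sigma> unitary_orbit_carrier[OF A_orbit S] that that] xA
      permutes_in_image[OF \<sigma>] that by simp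
  then show ?thesis unfolding orbit_diagonals_def
    using unitary_orbit_conj[OF A_orbit unitary_perm_mat[OF \<sigma>] S] by blast
qed

lemma index_conj_diag_real_mat:
  assumes W: "W \<in> carrier_mat n n" and j: "j < n" and k: "k < n"
  shows "(mat_adjoint W * diag_real_mat n lam * W) $$ (j,k) =
    (\<Sum>p<n. of_real (lam p) * (cnj (W $$ (p,j)) * W $$ (p,k)))"
proof -
  have "(\<Sum>q<n. cnj (W $$ (p,j)) * diag_real_mat n lam $$ (p,q) * W $$ (q,k)) =
      of_real (lam p) * (cnj (W $$ (p,j)) * W $$ (p,k))" if p: "p < n" for p
  proof -
    have "(\<Sum>q<n. cnj (W $$ (p,j)) * diag_real_mat n lam $$ (p,q) * W $$ (q,k)) =
        (\<Sum>q<n. if q = p then of_real (lam p) * (cnj (W $$ (p,j)) * W $$ (p,k)) else 0)"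
      using p by (intro sum.cong refl) (simp add: diag_real_mat_def)
    then show ?thesis using p by simp
  qed
  then show ?thesis
    by (simp add: index_adjoint_mult_mult[OF W diag_real_mat_carrier W j k])
qed

lemma diag_conj_diag_real_mat:
  assumes W: "W \<in> carrier_mat n n" and k: "k < n"
  shows "(mat_adjoint W * diag_real_mat n lam * W) $$ (k,k) = of_real (\<Sum>p<n. lam p * (cmod (W $$ (p,k)))\<^sup>2)"
proof -
  have "cnj z * z = of_real ((cmod z)\<^sup>2)" for z
    by (metis complex_norm_square mult.commute)
  then show ?thesis
    unfolding index_conj_diag_real_mat[OF W k k] by (simp del: of_real_power)
qed

lemma orbit_diagonals_majorized:
  assumes lam: "nonincreasing_upto n lam" and x: "x \<in> orbit_diagonals n (diag_real_mat n lam)"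
  shows "majorized n x lam"
proof -
  obtain A where A_orbit: "A \<in> unitary_orbit n (diag_real_mat n lam)" and xA: "\<forall>k<n. A $$ (k,k) = of_real (x k)"
    using x unfolding orbit_diagonals_def by blast
  obtain W where W: "unitary_mat n W" and A: "A = mat_adjoint W * diag_real_mat n lam * W"
    using A_orbit unfolding unitary_orbit_def by blast
  \<comment> \<open>the squared moduli of the entries of W form a doubly stochastic matrix\<close>
  define P where "P p k = (cmod (W $$ (p,k)))\<^sup>2" for p k
  have x_eq: "x k = (\<Sum>p<n. lam p * P p k)" if k: "k < n" for k
    using xA diag_conj_diag_real_mat[OF unitary_mat_carrier[OF W] k, of lam] k
    unfolding A P_def by (simp only: of_real_eq_iff)
  have rows: "(\<Sum>k<n. P p k) = 1" if "p < n" for p unfolding P_def by (rule unitary_row_norm[OF W that])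
  have cols: "(\<Sum>p<n. P p k) = 1" if "k < n" for k unfolding P_def by (rule unitary_col_norm[OF W that])
  have sum_x: "(\<Sum>k\<in>I. x k) = (\<Sum>p<n. (\<Sum>k\<in>I. P p k) * lam p)" if "I \<subseteq> {..<n}" for I
  proof -
    have "(\<Sum>k\<in>I. x k) = (\<Sum>k\<in>I. \<Sum>p<n. lam p * P p k)" using that x_eq by (intro sum.cong) auto
    also have "\<dots> = (\<Sum>p<n. \<Sum>k\<in>I. lam p * P p k)" by (rule sum.swap)
    finally show ?thesis by (simp add: sum_distrib_left mult.commute)
  qed
  show ?thesis unfolding majorized_def
  proof (intro conjI allI impI)
    show "(\<Sum>k<n. x k) = (\<Sum>k<n. lam k)" using sum_x[of "{..<n}"] rows by simp
    fix I assume I: "I \<subseteq> {..<n}"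
    have "\<forall>p<n. 0 \<le> (\<Sum>k\<in>I. P p k) \<and> (\<Sum>k\<in>I. P p k) \<le> 1"
    proof (intro allI impI conjI)
      fix p assume "p < n"
      show "0 \<le> (\<Sum>k\<in>I. P p k)" unfolding P_def by (simp add: sum_nonneg)
      have "(\<Sum>k\<in>I. P p k) \<le> (\<Sum>k<n. P p k)" using I unfolding P_def by (intro sum_mono2) auto
      then show "(\<Sum>k\<in>I. P p k) \<le> 1" using rows[OF \<open>p < n\<close>] by simp
    qed
    moreover have "(\<Sum>p<n. \<Sum>k\<in>I. P p k) = real (card I)"
      using I cols by (subst sum.swap) (simp add: subset_eq)
    moreover have "card I \<le> n" using card_mono[OF _ I] by simp
    ultimately show "(\<Sum>k\<in>I. x k) \<le> (\<Sum>k<card I. lam k)"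
      unfolding sum_x[OF I] by (rule weighted_sum_le_top_sum[OF lam])
  qed
qed

lemma majorized_orbit_diagonals:
  assumes lam: "nonincreasing_upto n lam" and y: "majorized n y lam"
  shows "y \<in> orbit_diagonals n (diag_real_mat n lam)"
proof -
  let ?L = "diag_real_mat n lam"
  have y_total: "(\<Sum>k<n. y k) = (\<Sum>k<n. lam k)"
    and y_sub: "\<And>I. I \<subseteq> {..<n} \<Longrightarrow> (\<Sum>k\<in>I. y k) \<le> (\<Sum>k<card I. lam k)"
    using y unfolding majorized_def by blast+
  have L: "?L \<in> carrier_mat n n" by (rule diag_real_mat_carrier)
  have "lam \<in> orbit_diagonals n ?L"
    unfolding orbit_diagonals_def using unitary_orbit_self[OF L]
    by (intro CollectI bexI[of _ ?L]) (auto simp: diag_real_mat_def)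
  obtain \<sigma> where \<sigma>: "\<sigma> permutes {..<n}" and sorted: "nonincreasing_upto n (y \<circ> \<sigma>)"
    using exists_sorting_permutation by blast
  have inj: "inj_on \<sigma> A" for A using permutes_inj_on[OF \<sigma>] .
  have prefix: "\<forall>l\<le>n. (\<Sum>k<l. (y \<circ> \<sigma>) k) \<le> (\<Sum>k<l. lam k)"
  proof (intro allI impI)
    fix l assume "l \<le> n"
    have "\<sigma> ` {..<l} \<subseteq> {..<n}"
    proof
      fix z assume "z \<in> \<sigma> ` {..<l}"
      then obtain w where "w < l" "z = \<sigma> w" by auto
      then show "z \<in> {..<n}" using permutes_in_image[OF \<sigma>, of w] \<open>l \<le> n\<close> by simp
    qed
    then have "(\<Sum>k\<in>\<sigma> ` {..<l}. y k) \<le> (\<Sum>k<card (\<sigma> ` {..<l}). lam k)"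
      by (rule y_sub)
    moreover have "(\<Sum>k\<in>\<sigma> ` {..<l}. y k) = (\<Sum>k<l. (y \<circ> \<sigma>) k)" by (rule sum.reindex[OF inj])
    moreover have "card (\<sigma> ` {..<l}) = l" using card_image[OF inj, of "{..<l}"] by simp
    ultimately show "(\<Sum>k<l. (y \<circ> \<sigma>) k) \<le> (\<Sum>k<l. lam k)" by simp
  qed
  have "(\<Sum>k<n. (y \<circ> \<sigma>) k) = (\<Sum>k\<in>\<sigma> ` {..<n}. y k)" by (rule sum.reindex[OF inj, symmetric])
  then have total: "(\<Sum>k<n. (y \<circ> \<sigma>) k) = (\<Sum>k<n. lam k)"
    using y_total permutes_image[OF \<sigma>] by simp
  have "y \<circ> \<sigma> \<in> orbit_diagonals n ?L"
    by (rule t_transform_closed_contains_majorized[OF orbit_diagonals_t_transform[OF _ L hermitian_diag_real_mat]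
          orbit_diagonals_cong \<open>lam \<in> orbit_diagonals n ?L\<close> lam sorted prefix total])
  then have "(y \<circ> \<sigma>) \<circ> inv_into UNIV \<sigma> \<in> orbit_diagonals n ?L"
    by (rule orbit_diagonals_permute[OF _ L permutes_inv[OF \<sigma>]])
  then show ?thesis
    by (rule orbit_diagonals_cong) (simp add: permutes_inverses(1)[OF \<sigma>])
qed

theorem orbit_diagonals_convex:
  assumes S: "S \<in> carrier_mat n n" and herm: "mat_adjoint S = S"
    and x: "x \<in> orbit_diagonals n S" and y: "y \<in> orbit_diagonals n S" and t: "0 \<le> t" "t \<le> 1"
  shows "(\<lambda>k. (1 - t) * x k + t * y k) \<in> orbit_diagonals n S"
proof -
  obtain lam where lam: "nonincreasing_upto n lam" and L: "diag_real_mat n lam \<in> unitary_orbit n S"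
    using hermitian_spectral_sorted[OF S herm] by blast
  have same: "orbit_diagonals n S = orbit_diagonals n (diag_real_mat n lam)"
    unfolding orbit_diagonals_def unitary_orbit_eq[OF L S] ..
  have "majorized n x lam" "majorized n y lam"
    using orbit_diagonals_majorized[OF lam] x y unfolding same by auto
  then show ?thesis
    unfolding same by (intro majorized_orbit_diagonals[OF lam] majorized_convex[OF _ _ t])
qed

section \<open>Pinchings of unitary orbits\<close>

lemma psd_diag_real_mat:
  assumes nonneg: "\<forall>k<n. 0 \<le> lam k"
  shows "psd_mat n (diag_real_mat n lam)"
proof -
  have quad: "conjugate x \<bullet> (diag_real_mat n lam *\<^sub>v x) = of_real (\<Sum>k<n. lam k * (cmod (x $ k))\<^sup>2)"
    if x: "x \<in> carrier_vec n" for x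
  proof -
    have Dx: "(diag_real_mat n lam *\<^sub>v x) $ k = of_real (lam k) * x $ k" if k: "k < n" for k
    proof -
      have "(diag_real_mat n lam *\<^sub>v x) $ k = (\<Sum>j\<in>{0..<n}. (if k = j then of_real (lam k) else 0) * x $ j)"
        using x k by (simp add: diag_real_mat_def scalar_prod_def)
      also have "\<dots> = (\<Sum>j\<in>{0..<n}. if k = j then of_real (lam k) * x $ j else 0)"
        by (intro sum.cong) auto
      finally show ?thesis using k by simp
    qed
    have "conjugate x \<bullet> (diag_real_mat n lam *\<^sub>v x) = (\<Sum>k\<in>{0..<n}. cnj (x $ k) * (diag_real_mat n lam *\<^sub>v x) $ k)"
      using x by (simp add: scalar_prod_def diag_real_mat_def)
    also have "\<dots> = (\<Sum>k<n. of_real (lam k) * (x $ k * cnj (x $ k)))"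
      by (simp add: atLeast0LessThan Dx algebra_simps)
    also have "\<dots> = (\<Sum>k<n. of_real (lam k) * of_real ((cmod (x $ k))\<^sup>2))"
      by (simp only: complex_norm_square)
    finally show ?thesis by simp
  qed
  show ?thesis
    unfolding psd_mat_def using quad nonneg
    by (auto simp: diag_real_mat_carrier hermitian_diag_real_mat intro!: sum_nonneg)
qed

lemma pinching_singletons_orbit:
  assumes d: "\<forall>i<length d. d ! i = 1" and n: "sum_list d = n"
    and S: "S \<in> carrier_mat n n" and herm: "mat_adjoint S = S" and A: "A \<in> unitary_orbit n S"
  shows "pinching n d A = diag_real_mat n (\<lambda>k. Re (A $$ (k,k)))"
  using hermitian_diag_real[OF unitary_orbit_carrier[OF A S] unitary_orbit_hermitian[OF A S herm]]
  unfolding pinching_singletons[OF d n unitary_orbit_carrier[OF A S]] diag_real_mat_def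
  by (intro eq_matI) auto

lemma convex_pinching_orbit_singletons:
  assumes d: "\<forall>i<length d. d ! i = 1" and n: "sum_list d = n"
    and S: "S \<in> carrier_mat n n" and herm: "mat_adjoint S = S"
  shows "convex_mat_set (pinching n d ` unitary_orbit n S)"
proof -
  have image: "pinching n d ` unitary_orbit n S = diag_real_mat n ` orbit_diagonals n S"
  proof (intro equalityI subsetI)
    fix X assume "X \<in> pinching n d ` unitary_orbit n S"
    then obtain A where A: "A \<in> unitary_orbit n S" and X: "X = pinching n d A" by blast
    have "(\<lambda>k. Re (A $$ (k,k))) \<in> orbit_diagonals n S"
      unfolding orbit_diagonals_def
      using A hermitian_diag_real[OF unitary_orbit_carrier[OF A S] unitary_orbit_hermitian[OF A S herm]] by blast
    then show "X \<in> diag_real_mat n ` orbit_diagonals n S"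
      unfolding X pinching_singletons_orbit[OF d n S herm A] by blast
  next
    fix X assume "X \<in> diag_real_mat n ` orbit_diagonals n S"
    then obtain x A where A: "A \<in> unitary_orbit n S" and xA: "\<forall>k<n. A $$ (k,k) = of_real (x k)"
      and X: "X = diag_real_mat n x"
      unfolding orbit_diagonals_def by blast
    have "X = pinching n d A"
      unfolding X pinching_singletons_orbit[OF d n S herm A] diag_real_mat_def using xA
      by (intro eq_matI) auto
    then show "X \<in> pinching n d ` unitary_orbit n S" using A by blast
  qed
  have comb: "of_real (1 - t) \<cdot>\<^sub>m diag_real_mat n x + of_real t \<cdot>\<^sub>m diag_real_mat n y =
      diag_real_mat n (\<lambda>k. (1 - t) * x k + t * y k)" for x y and t :: real
    unfolding diag_real_mat_def by (intro eq_matI) auto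
  show ?thesis
    unfolding convex_mat_set_def image
  proof (intro ballI allI impI)
    fix X Y and t :: real
    assume "X \<in> diag_real_mat n ` orbit_diagonals n S" "Y \<in> diag_real_mat n ` orbit_diagonals n S"
      and t: "0 \<le> t \<and> t \<le> 1"
    then obtain x y where x: "x \<in> orbit_diagonals n S" and y: "y \<in> orbit_diagonals n S"
      and X: "X = diag_real_mat n x" and Y: "Y = diag_real_mat n y" by blast
    show "of_real (1 - t) \<cdot>\<^sub>m X + of_real t \<cdot>\<^sub>m Y \<in> diag_real_mat n ` orbit_diagonals n S"
      unfolding X Y comb using orbit_diagonals_convex[OF S herm x y] t by blast
  qed
qed

lemma index_conj_unit_proj:
  assumes W: "W \<in> carrier_mat n n" and a: "a < n" and j: "j < n" and k: "k < n"
  shows "(mat_adjoint W * diag_real_mat n (\<lambda>p. if p = a then 1 else 0) * W) $$ (j,k) =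
    cnj (W $$ (a,j)) * W $$ (a,k)"
proof -
  have "(mat_adjoint W * diag_real_mat n (\<lambda>p. if p = a then 1 else 0) * W) $$ (j,k) =
      (\<Sum>p<n. if p = a then cnj (W $$ (p,j)) * W $$ (p,k) else 0)"
    unfolding index_conj_diag_real_mat[OF W j k] by (intro sum.cong) auto
  then show ?thesis using a by simp
qed

lemma pinching_orbit_not_convex:
  assumes i0: "i0 < length d" "2 \<le> d ! i0" and n: "sum_list d = n"
  defines "S \<equiv> diag_real_mat n (\<lambda>k. if k = block_start d i0 then 1 else 0)"
  shows "\<not> convex_mat_set (pinching n d ` unitary_orbit n S)"
proof
  assume convex: "convex_mat_set (pinching n d ` unitary_orbit n S)"
  define a where "a = block_start d i0"
  define b where "b = Suc a"
  have bn: "b < n" using block_end_le_sum_list[OF i0(1)] i0(2) n unfolding a_def b_def by simp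
  have an: "a < n" and ab: "a \<noteq> b" using bn unfolding b_def by simp_all
  have same_block: "\<exists>i<length d. j \<in> block d i \<and> k \<in> block d i" if "j \<in> {a,b}" "k \<in> {a,b}" for j k
    using i0 that unfolding block_def a_def b_def by auto
  have Sc: "S \<in> carrier_mat n n" unfolding S_def by (rule diag_real_mat_carrier)
  \<comment> \<open>swapping a and b conjugates the projection onto e_a into the projection onto e_b\<close>
  define \<sigma> where "\<sigma> = Transposition.transpose a b"
  have \<sigma>: "\<sigma> permutes {..<n}" unfolding \<sigma>_def using an bn by (intro permutes_swap_id) auto
  define T where "T = mat_adjoint (perm_mat n \<sigma>) * S * perm_mat n \<sigma>"
  have Tc: "T \<in> carrier_mat n n" unfolding T_def using unitary_conj_carrier[OF unitary_perm_mat[OF \<sigma>] Sc] .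
  have S_index: "S $$ (j,k) = (if j = a \<and> k = a then 1 else 0)" if "j < n" "k < n" for j k
    using that unfolding S_def a_def diag_real_mat_def by auto
  have T_index: "T $$ (j,k) = (if j = b \<and> k = b then 1 else 0)" if "j < n" "k < n" for j k
    using that ab permutes_in_image[OF \<sigma>] unfolding T_def index_perm_mat_conj[OF \<sigma> Sc that]
    by (auto simp: S_index \<sigma>_def Transposition.transpose_def)
  have T_orbit: "T \<in> unitary_orbit n S" unfolding T_def unitary_orbit_def using unitary_perm_mat[OF \<sigma>] by blast
  let ?M = "of_real (1 - 1/2) \<cdot>\<^sub>m pinching n d S + of_real (1/2) \<cdot>\<^sub>m pinching n d T"
  have "?M \<in> pinching n d ` unitary_orbit n S"
    using convex[unfolded convex_mat_set_def, rule_format,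
        OF imageI[OF unitary_orbit_self[OF Sc]] imageI[OF T_orbit], of "1/2"] by simp
  then obtain W where W: "unitary_mat n W" and M: "?M = pinching n d (mat_adjoint W * S * W)"
    unfolding unitary_orbit_def by blast
  have Wc: "W \<in> carrier_mat n n" using unitary_mat_carrier[OF W] .
  have key: "cnj (W $$ (a,j)) * W $$ (a,k) = (S $$ (j,k) + T $$ (j,k)) / 2"
    if jk: "j \<in> {a,b}" "k \<in> {a,b}" for j k
  proof -
    have j: "j < n" and k: "k < n" using jk an bn by auto
    have "cnj (W $$ (a,j)) * W $$ (a,k) = (mat_adjoint W * S * W) $$ (j,k)"
      unfolding S_def a_def[symmetric] by (rule index_conj_unit_proj[OF Wc an j k, symmetric])
    also have "\<dots> = ?M $$ (j,k)"
      using M index_pinching[OF unitary_conj_carrier[OF W Sc] j k] same_block[OF jk] by simp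
    also have "\<dots> = of_real (1 - 1/2) * pinching n d S $$ (j,k) + of_real (1/2) * pinching n d T $$ (j,k)"
      using pinching_carrier[OF Sc, of d] pinching_carrier[OF Tc, of d] j k by simp
    also have "\<dots> = (S $$ (j,k) + T $$ (j,k)) / 2"
      unfolding index_pinching[OF Sc j k] index_pinching[OF Tc j k] if_P[OF same_block[OF jk]] by simp
    finally show ?thesis .
  qed
  have "cnj (W $$ (a,a)) * W $$ (a,a) = 1/2" "cnj (W $$ (a,b)) * W $$ (a,b) = 1/2"
    and "cnj (W $$ (a,a)) * W $$ (a,b) = 0"
    using key[of a a] key[of b b] key[of a b] S_index T_index an bn ab by simp_all
  then show False by auto
qed

theorem proposition3p4:
  fixes n :: nat and d :: "nat list"
  assumes "\<forall>i < length d. d ! i \<ge> 1"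
    and "sum_list d = n"
  shows "(\<forall>S. psd_mat n S \<longrightarrow> convex_mat_set (pinching n d ` unitary_orbit n S))
         \<longleftrightarrow> (\<forall>i < length d. d ! i = 1)"
proof
  assume convex: "\<forall>S. psd_mat n S \<longrightarrow> convex_mat_set (pinching n d ` unitary_orbit n S)"
  show "\<forall>i < length d. d ! i = 1"
  proof (rule ccontr)
    assume "\<not> (\<forall>i < length d. d ! i = 1)"
    then obtain i0 where i0: "i0 < length d" "2 \<le> d ! i0" using assms(1) by force
    have "psd_mat n (diag_real_mat n (\<lambda>k. if k = block_start d i0 then 1 else 0))"
      by (rule psd_diag_real_mat) simp
    then show False using convex pinching_orbit_not_convex[OF i0 assms(2)] by blast
  qed
next
  assume "\<forall>i < length d. d ! i = 1"
  then show "\<forall>S. psd_mat n S \<longrightarrow> convex_mat_set (pinching n d ` unitary_orbit n S)"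
    using convex_pinching_orbit_singletons[OF _ assms(2)] unfolding psd_mat_def by blast
qed

end
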